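(* Let $r\geq 2$. There exists $c=c(r)>0$ such that the following holds. Let $H$ be an $r$-uniform hypergraph on $n$ vertices of average degree $d$, where $1\leq d\leq \frac{1}{2}\binom{n-1}{r-1}$. Then $\mathrm{disc}(H)\geq c\sqrt{d}\,n$.
   Context: For an $r$-uniform hypergraph $H$ on $n$ vertices with edge density $p=|E(H)|/\binom{n}{r}$ and $U\subset V(H)$, let $e(U)$ be the number of edges of $H$ contained in $U$ and $\mathrm{disc}(U)=e(U)-p\binom{|U|}{r}$. The discrepancy is $\mathrm{disc}(H)=\max_{U\subset V(H)}|\mathrm{disc}(U)|$. The average degree is $d=r|E(H)|/n$. *)

theory Defs
  imports Complex_Main
begin

definition uniform_hypergraph :: "nat \<Rightarrow> 'a set \<Rightarrow> 'a set set \<Rightarrow> bool" where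
  "uniform_hypergraph r V E \<longleftrightarrow> finite V \<and> (\<forall>e\<in>E. e \<subseteq> V \<and> card e = r)"

definition hg_density :: "nat \<Rightarrow> 'a set \<Rightarrow> 'a set set \<Rightarrow> real" where
  "hg_density r V E = real (card E) / real (card V choose r)"

definition hg_edges_in :: "'a set set \<Rightarrow> 'a set \<Rightarrow> nat" where
  "hg_edges_in E U = card {e \<in> E. e \<subseteq> U}"

definition hg_disc_set :: "nat \<Rightarrow> 'a set \<Rightarrow> 'a set set \<Rightarrow> 'a set \<Rightarrow> real" where
  "hg_disc_set r V E U = real (hg_edges_in E U) - hg_density r V E * real (card U choose r)"

definition hg_disc :: "nat \<Rightarrow> 'a set \<Rightarrow> 'a set set \<Rightarrow> real" where
  "hg_disc r V E = Max ((\<lambda>U. \<bar>hg_disc_set r V E U\<bar>) ` Pow V)"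

definition hg_avg_degree :: "nat \<Rightarrow> 'a set \<Rightarrow> 'a set set \<Rightarrow> real" where
  "hg_avg_degree r V E = real r * real (card E) / real (card V)"

end

(*
  Let f(T) = [T in E] - p for the r-subsets T of V, so that disc(U) is the sum of f over the
  r-subsets of U. If the vertices of degree at least 2^(r+2) d carry half of the total degree,
  adding a uniformly random set of the remaining vertices to them gives discrepancy at least
  d n / 2^(r+2). Otherwise the light vertices carry half of it; colour V uniformly at random
  with r colours. For v of colour 0, the sum of f over the rainbow r-sets {v} + S with S inside
  a set X of vertices of positive colour is, as a function of X, a polynomial of degree r - 1
  whose top coefficients equal 1 - p >= 1/2 on the rainbow links of v. By the Bonami lemma its
  mean absolute value is at least 6^-r times the square root of the number of these links,
  while inclusion-exclusion over the colours bounds the sum over v of these absolute values by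
  2^(r+1) disc(H). A light vertex has fewer than 2^(r+2) d links, so averaging over the
  colourings yields disc(H) >= c sqrt(d) n.
*)

theory Submission
  imports Defs "HOL-Analysis.Convex"
begin

section \<open>Averages over the Boolean cube\<close>

definition cube_avg :: "'a set \<Rightarrow> ('a set \<Rightarrow> real) \<Rightarrow> real" where
  "cube_avg A F = (\<Sum>X\<in>Pow A. F X) / 2 ^ card A"

lemma sum_Pow_insert:
  assumes "finite A" "w \<notin> A"
  shows "(\<Sum>X\<in>Pow (insert w A). F X) = (\<Sum>X\<in>Pow A. F X + F (insert w X))"
proof -
  have inj: "inj_on (insert w) (Pow A)"
    using assms(2) by (auto simp: inj_on_def)
  have disj: "Pow A \<inter> insert w ` Pow A = {}"
    using assms(2) by auto
  have "(\<Sum>X\<in>Pow (insert w A). F X) = (\<Sum>X\<in>Pow A. F X) + (\<Sum>X\<in>insert w ` Pow A. F X)"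
    unfolding Pow_insert using assms(1) disj by (intro sum.union_disjoint) auto
  also have "(\<Sum>X\<in>insert w ` Pow A. F X) = (\<Sum>X\<in>Pow A. F (insert w X))"
    using inj by (simp add: sum.reindex)
  finally show ?thesis
    by (simp add: sum.distrib)
qed

lemma cube_avg_insert:
  assumes "finite A" "w \<notin> A"
  shows "cube_avg (insert w A) F = cube_avg A (\<lambda>X. (F X + F (insert w X)) / 2)"
  using assms unfolding cube_avg_def
  by (simp add: sum_Pow_insert sum_divide_distrib[symmetric] field_simps)

lemma cube_avg_cong: "(\<And>X. X \<subseteq> A \<Longrightarrow> F X = G X) \<Longrightarrow> cube_avg A F = cube_avg A G"
  unfolding cube_avg_def by (metis PowD sum.cong)

lemma cube_avg_add: "cube_avg A (\<lambda>X. F X + G X) = cube_avg A F + cube_avg A G"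
  unfolding cube_avg_def by (simp add: sum.distrib add_divide_distrib)

lemma cube_avg_diff: "cube_avg A (\<lambda>X. F X - G X) = cube_avg A F - cube_avg A G"
  unfolding cube_avg_def by (simp add: sum_subtractf diff_divide_distrib)

lemma cube_avg_cmult: "cube_avg A (\<lambda>X. c * F X) = c * cube_avg A F"
  unfolding cube_avg_def by (simp add: sum_distrib_left)

lemma cube_avg_sum:
  "finite I \<Longrightarrow> cube_avg A (\<lambda>X. \<Sum>i\<in>I. F i X) = (\<Sum>i\<in>I. cube_avg A (F i))"
  unfolding cube_avg_def by (simp add: sum.swap[of _ I] sum_divide_distrib)

lemma cube_avg_const: "finite A \<Longrightarrow> cube_avg A (\<lambda>X. c) = c"
  unfolding cube_avg_def by (simp add: card_Pow)

lemma cube_avg_mono: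
  "finite A \<Longrightarrow> (\<And>X. X \<subseteq> A \<Longrightarrow> F X \<le> G X) \<Longrightarrow> cube_avg A F \<le> cube_avg A G"
  unfolding cube_avg_def by (intro divide_right_mono sum_mono) auto

lemma cube_avg_le: "finite A \<Longrightarrow> (\<And>X. X \<subseteq> A \<Longrightarrow> F X \<le> M) \<Longrightarrow> cube_avg A F \<le> M"
  using cube_avg_mono[of A F "\<lambda>X. M"] cube_avg_const[of A M] by simp

lemma cube_avg_nonneg: "finite A \<Longrightarrow> (\<And>X. X \<subseteq> A \<Longrightarrow> 0 \<le> F X) \<Longrightarrow> 0 \<le> cube_avg A F"
  using cube_avg_mono[of A "\<lambda>X. 0" F] cube_avg_const[of A 0] by simp

lemma cube_avg_indicator_subset:
  assumes "finite A" "Q \<subseteq> A"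
  shows "cube_avg A (\<lambda>X. of_bool (Q \<subseteq> X)) = (1/2) ^ card Q"
  using assms
proof (induction A arbitrary: Q rule: finite_induct)
  case empty
  then show ?case by (simp add: cube_avg_def)
next
  case (insert w A)
  show ?case
  proof (cases "w \<in> Q")
    case True
    define Q' where "Q' = Q - {w}"
    have Q: "Q = insert w Q'" "w \<notin> Q'" "Q' \<subseteq> A"
      using True insert unfolding Q'_def by auto
    have "cube_avg (insert w A) (\<lambda>X. of_bool (Q \<subseteq> X))
        = cube_avg A (\<lambda>X. (1/2) * of_bool (Q' \<subseteq> X))"
      unfolding cube_avg_insert[OF insert(1,2)] using Q insert(2)
      by (intro cube_avg_cong) auto
    also have "\<dots> = (1/2) ^ card Q"
      using insert Q by (simp only: cube_avg_cmult) (simp add: finite_subset)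
    finally show ?thesis .
  next
    case False
    have "cube_avg (insert w A) (\<lambda>X. of_bool (Q \<subseteq> X)) = cube_avg A (\<lambda>X. of_bool (Q \<subseteq> X))"
      unfolding cube_avg_insert[OF insert(1,2)] using False by (intro cube_avg_cong) auto
    then show ?thesis
      using insert False by auto
  qed
qed

lemma cube_avg_Cauchy_Schwarz:
  "(cube_avg A (\<lambda>X. F X * G X))\<^sup>2 \<le> cube_avg A (\<lambda>X. (F X)\<^sup>2) * cube_avg A (\<lambda>X. (G X)\<^sup>2)"
proof -
  have "(cube_avg A (\<lambda>X. F X * G X))\<^sup>2 = (\<Sum>X\<in>Pow A. F X * G X)\<^sup>2 / (2 ^ card A)\<^sup>2"
    unfolding cube_avg_def by (simp add: power_divide)
  also have "\<dots> \<le> ((\<Sum>X\<in>Pow A. (F X)\<^sup>2) * (\<Sum>X\<in>Pow A. (G X)\<^sup>2)) / (2 ^ card A)\<^sup>2"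
    by (intro divide_right_mono Cauchy_Schwarz_ineq_sum) auto
  also have "\<dots> = cube_avg A (\<lambda>X. (F X)\<^sup>2) * cube_avg A (\<lambda>X. (G X)\<^sup>2)"
    unfolding cube_avg_def by (simp add: power2_eq_square)
  finally show ?thesis .
qed

lemma abs_ge_of_power4_le:
  fixes x l :: real
  assumes "0 < l"
  shows "3 * l\<^sup>2 * x\<^sup>2 - x ^ 4 \<le> 2 * l ^ 3 * \<bar>x\<bar>"
proof -
  have "2 * l ^ 3 * \<bar>x\<bar> - (3 * l\<^sup>2 * \<bar>x\<bar>\<^sup>2 - \<bar>x\<bar> ^ 4) = \<bar>x\<bar> * (\<bar>x\<bar> - l)\<^sup>2 * (\<bar>x\<bar> + 2 * l)"
    by algebra
  moreover have "0 \<le> \<bar>x\<bar> * (\<bar>x\<bar> - l)\<^sup>2 * (\<bar>x\<bar> + 2 * l)"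
    using assms by simp
  ultimately show ?thesis
    by (simp add: power_even_abs)
qed

text \<open>Evaluate the pointwise inequality above at \<open>l = C \<sigma>\<close>, where \<open>\<sigma>\<close> is the
  standard deviation.\<close>

lemma cube_avg_abs_ge_of_fourth_moment:
  assumes A: "finite A" and C: "0 < C"
    and m4: "cube_avg A (\<lambda>X. F X ^ 4) \<le> C\<^sup>2 * (cube_avg A (\<lambda>X. (F X)\<^sup>2))\<^sup>2"
  shows "sqrt (cube_avg A (\<lambda>X. (F X)\<^sup>2)) \<le> C * cube_avg A (\<lambda>X. \<bar>F X\<bar>)"
proof -
  define s where "s = sqrt (cube_avg A (\<lambda>X. (F X)\<^sup>2))"
  define m1 where "m1 = cube_avg A (\<lambda>X. \<bar>F X\<bar>)"
  have m2_nonneg: "0 \<le> cube_avg A (\<lambda>X. (F X)\<^sup>2)"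
    by (rule cube_avg_nonneg[OF A]) simp
  then have m2: "cube_avg A (\<lambda>X. (F X)\<^sup>2) = s\<^sup>2"
    unfolding s_def by simp
  show ?thesis
  proof (cases "s = 0")
    case True
    then show ?thesis
      using C cube_avg_nonneg[OF A, of "\<lambda>X. \<bar>F X\<bar>"] by (simp add: s_def)
  next
    case False
    then have s: "0 < s"
      using m2_nonneg unfolding s_def by simp
    have "cube_avg A (\<lambda>X. 3 * (C * s)\<^sup>2 * (F X)\<^sup>2 - F X ^ 4)
        \<le> cube_avg A (\<lambda>X. 2 * (C * s) ^ 3 * \<bar>F X\<bar>)"
      using C s by (intro cube_avg_mono[OF A] abs_ge_of_power4_le) simp
    then have "3 * (C * s)\<^sup>2 * s\<^sup>2 - C\<^sup>2 * (s\<^sup>2)\<^sup>2 \<le> 2 * (C * s) ^ 3 * m1"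
      using m4 unfolding m1_def by (simp add: cube_avg_cmult cube_avg_diff m2)
    then have "(2 * C\<^sup>2 * s ^ 3) * s \<le> (2 * C\<^sup>2 * s ^ 3) * (C * m1)"
      by (simp add: algebra_simps power2_eq_square power3_eq_cube)
    then show ?thesis
      using C s unfolding s_def[symmetric] m1_def[symmetric] by simp
  qed
qed

section \<open>The Bonami lemma\<close>

text \<open>Functions on \<open>Pow A\<close> are expanded in the monomials \<open>[S \<subseteq> X]\<close> of the \<open>0/1\<close>
  indicators rather than in the Fourier basis; the Bonami lemma holds in this basis too.\<close>

definition subset_poly :: "'a set \<Rightarrow> ('a set \<Rightarrow> real) \<Rightarrow> 'a set \<Rightarrow> real" where
  "subset_poly A a X = (\<Sum>S\<in>Pow A. a S * of_bool (S \<subseteq> X))"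

definition coeffs_degree_le :: "'a set \<Rightarrow> nat \<Rightarrow> ('a set \<Rightarrow> real) \<Rightarrow> bool" where
  "coeffs_degree_le A k a \<longleftrightarrow> (\<forall>S. S \<subseteq> A \<longrightarrow> k < card S \<longrightarrow> a S = 0)"

text \<open>Splitting off the variable \<open>w\<close>: the polynomial equals \<open>g - h\<close> when \<open>w \<notin> X\<close> and
  \<open>g + h\<close> when \<open>w \<in> X\<close>, where \<open>g\<close> and \<open>h\<close> do not depend on \<open>w\<close> and have the following
  coefficients.\<close>

definition coeff_avg :: "'a \<Rightarrow> ('a set \<Rightarrow> real) \<Rightarrow> 'a set \<Rightarrow> real" where
  "coeff_avg w a S = a S + a (insert w S) / 2"

definition coeff_halfdiff :: "'a \<Rightarrow> ('a set \<Rightarrow> real) \<Rightarrow> 'a set \<Rightarrow> real" where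
  "coeff_halfdiff w a S = a (insert w S) / 2"

lemma subset_poly_insert:
  assumes "finite A" "w \<notin> A" "X \<subseteq> A"
  shows "subset_poly (insert w A) a X
           = subset_poly A (coeff_avg w a) X - subset_poly A (coeff_halfdiff w a) X"
    and "subset_poly (insert w A) a (insert w X)
           = subset_poly A (coeff_avg w a) X + subset_poly A (coeff_halfdiff w a) X"
proof -
  have "w \<notin> X"
    using assms by auto
  have monomials: "\<not> insert w S \<subseteq> X" "(S \<subseteq> insert w X) = (S \<subseteq> X)"
    "(insert w S \<subseteq> insert w X) = (S \<subseteq> X)" if "S \<in> Pow A" for S
    using assms that by auto
  show "subset_poly (insert w A) a X
           = subset_poly A (coeff_avg w a) X - subset_poly A (coeff_halfdiff w a) X"
    unfolding subset_poly_def sum_Pow_insert[OF assms(1,2)] sum_subtractf[symmetric]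
    by (intro sum.cong refl) (simp add: \<open>w \<notin> X\<close> monomials coeff_avg_def coeff_halfdiff_def algebra_simps)
  show "subset_poly (insert w A) a (insert w X)
           = subset_poly A (coeff_avg w a) X + subset_poly A (coeff_halfdiff w a) X"
    unfolding subset_poly_def sum_Pow_insert[OF assms(1,2)] sum.distrib[symmetric]
    by (intro sum.cong refl) (simp add: \<open>w \<notin> X\<close> monomials coeff_avg_def coeff_halfdiff_def algebra_simps)
qed

lemma subset_poly_eq_sum_Pow:
  assumes "finite A" "X \<subseteq> A"
  shows "subset_poly A a X = (\<Sum>S\<in>Pow X. a S)"
proof -
  have "Pow A \<inter> {S. S \<subseteq> X} = Pow X"
    using assms by auto
  then show ?thesis
    unfolding subset_poly_def using sum_mult_of_bool_eq[of "Pow A" a "\<lambda>S. S \<subseteq> X"] assms by simp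
qed

lemma coeffs_degree_le_coeff_avg:
  assumes "finite A" "w \<notin> A" "coeffs_degree_le (insert w A) k a"
  shows "coeffs_degree_le A k (coeff_avg w a)"
  unfolding coeffs_degree_le_def
proof (intro allI impI)
  fix S assume S: "S \<subseteq> A" "k < card S"
  then have "card (insert w S) = Suc (card S)"
    using assms(1,2) by (meson card_insert_disjoint finite_subset subsetD)
  then have "S \<subseteq> insert w A" "insert w S \<subseteq> insert w A" "k < card (insert w S)"
    using S by auto
  then have "a S = 0" "a (insert w S) = 0"
    using assms(3) S(2) unfolding coeffs_degree_le_def by blast+
  then show "coeff_avg w a S = 0"
    by (simp add: coeff_avg_def)
qed

lemma coeffs_degree_le_coeff_halfdiff:
  assumes "finite A" "w \<notin> A" "coeffs_degree_le (insert w A) (Suc k) a"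
  shows "coeffs_degree_le A k (coeff_halfdiff w a)"
  unfolding coeffs_degree_le_def
proof (intro allI impI)
  fix S assume S: "S \<subseteq> A" "k < card S"
  then have "card (insert w S) = Suc (card S)"
    using assms(1,2) by (meson card_insert_disjoint finite_subset subsetD)
  then have "insert w S \<subseteq> insert w A" "Suc k < card (insert w S)"
    using S by auto
  then show "coeff_halfdiff w a S = 0"
    using assms(3) unfolding coeffs_degree_le_def coeff_halfdiff_def by simp
qed

lemma coeff_halfdiff_degree_0:
  assumes "finite A" "coeffs_degree_le (insert w A) 0 a" "S \<subseteq> A"
  shows "coeff_halfdiff w a S = 0"
proof -
  have "insert w S \<subseteq> insert w A" "0 < card (insert w S)"
    using assms(1,3) finite_subset by (auto simp: card_gt_0_iff)
  then show ?thesis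
    using assms(2) unfolding coeffs_degree_le_def coeff_halfdiff_def by simp
qed

lemma cube_avg_subset_poly_power2_insert:
  assumes "finite A" "w \<notin> A"
  shows "cube_avg (insert w A) (\<lambda>X. (subset_poly (insert w A) a X)\<^sup>2)
    = cube_avg A (\<lambda>X. (subset_poly A (coeff_avg w a) X)\<^sup>2)
      + cube_avg A (\<lambda>X. (subset_poly A (coeff_halfdiff w a) X)\<^sup>2)"
proof -
  have "((subset_poly (insert w A) a X)\<^sup>2 + (subset_poly (insert w A) a (insert w X))\<^sup>2) / 2
      = (subset_poly A (coeff_avg w a) X)\<^sup>2 + (subset_poly A (coeff_halfdiff w a) X)\<^sup>2"
    if "X \<subseteq> A" for X
    unfolding subset_poly_insert[OF assms that] by (simp add: field_simps power2_eq_square)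
  then show ?thesis
    unfolding cube_avg_insert[OF assms] cube_avg_add[symmetric] by (rule cube_avg_cong)
qed

lemma cube_avg_subset_poly_power4_insert:
  assumes "finite A" "w \<notin> A"
  shows "cube_avg (insert w A) (\<lambda>X. (subset_poly (insert w A) a X) ^ 4)
    = cube_avg A (\<lambda>X. (subset_poly A (coeff_avg w a) X) ^ 4)
      + 6 * cube_avg A (\<lambda>X. (subset_poly A (coeff_avg w a) X)\<^sup>2
                             * (subset_poly A (coeff_halfdiff w a) X)\<^sup>2)
      + cube_avg A (\<lambda>X. (subset_poly A (coeff_halfdiff w a) X) ^ 4)"
proof -
  have "((subset_poly (insert w A) a X) ^ 4 + (subset_poly (insert w A) a (insert w X)) ^ 4) / 2
      = (subset_poly A (coeff_avg w a) X) ^ 4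
        + 6 * ((subset_poly A (coeff_avg w a) X)\<^sup>2 * (subset_poly A (coeff_halfdiff w a) X)\<^sup>2)
        + (subset_poly A (coeff_halfdiff w a) X) ^ 4"
    if "X \<subseteq> A" for X
    unfolding subset_poly_insert[OF assms that] by (simp add: field_simps power2_eq_square power4_eq_xxxx)
  then show ?thesis
    unfolding cube_avg_insert[OF assms] cube_avg_cmult[symmetric] cube_avg_add[symmetric]
    by (rule cube_avg_cong)
qed

lemma bonami_step:
  fixes \<beta> \<gamma> B C X :: real
  assumes "0 \<le> \<beta>" "0 \<le> \<gamma>" "0 \<le> C"
    and B: "B \<le> 9 ^ Suc k * \<beta>\<^sup>2" and C: "C \<le> 9 ^ k * \<gamma>\<^sup>2" and X: "X\<^sup>2 \<le> B * C"
  shows "B + 6 * X + C \<le> 9 ^ Suc k * (\<beta> + \<gamma>)\<^sup>2"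
proof -
  have mult_square_identity: "9 * t * \<beta>\<^sup>2 * (t * \<gamma>\<^sup>2) = (3 * t * \<beta> * \<gamma>)\<^sup>2" for t :: real
    by algebra
  have square_sum_identity:
    "9 * t * (\<beta> + \<gamma>)\<^sup>2 = 9 * t * \<beta>\<^sup>2 + 6 * (3 * t * \<beta> * \<gamma>) + 9 * t * \<gamma>\<^sup>2" for t :: real
    by algebra
  have "X\<^sup>2 \<le> (9 ^ Suc k * \<beta>\<^sup>2) * C"
    using X mult_right_mono[OF B \<open>0 \<le> C\<close>] by linarith
  also have "\<dots> \<le> (9 ^ Suc k * \<beta>\<^sup>2) * (9 ^ k * \<gamma>\<^sup>2)"
    using C by (intro mult_left_mono) auto
  also have "\<dots> = (3 * 9 ^ k * \<beta> * \<gamma>)\<^sup>2"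
    using mult_square_identity[of "9 ^ k"] by simp
  finally have "X\<^sup>2 \<le> (3 * 9 ^ k * \<beta> * \<gamma>)\<^sup>2" .
  then have "X \<le> 3 * 9 ^ k * \<beta> * \<gamma>"
    by (rule power2_le_imp_le) (use assms(1,2) in simp)
  moreover have "9 ^ k * \<gamma>\<^sup>2 \<le> 9 ^ Suc k * (\<gamma>::real)\<^sup>2"
    by (intro mult_right_mono) auto
  moreover have "9 ^ Suc k * (\<beta> + \<gamma>)\<^sup>2
      = 9 ^ Suc k * \<beta>\<^sup>2 + 6 * (3 * 9 ^ k * \<beta> * \<gamma>) + 9 ^ Suc k * (\<gamma>::real)\<^sup>2"
    using square_sum_identity[of "9 ^ k"] by simp
  ultimately show ?thesis
    using B C by linarith
qed

text \<open>Write \<open>f = g \<mp> h\<close> as in \<open>subset_poly_insert\<close>. Then \<open>E f\<^sup>2 = E g\<^sup>2 + E h\<^sup>2\<close> and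
  \<open>E f ^ 4 = E g ^ 4 + 6 E (g\<^sup>2 h\<^sup>2) + E h ^ 4\<close>, where \<open>h\<close> has degree one less than \<open>f\<close>;
  the cross term is bounded by Cauchy-Schwarz.\<close>

theorem bonami:
  assumes "finite A" "coeffs_degree_le A k a"
  shows "cube_avg A (\<lambda>X. (subset_poly A a X) ^ 4) \<le> 9 ^ k * (cube_avg A (\<lambda>X. (subset_poly A a X)\<^sup>2))\<^sup>2"
  using assms
proof (induction A arbitrary: a k rule: finite_induct)
  case empty
  have "1 * (subset_poly {} a {}) ^ 4 \<le> 9 ^ k * (subset_poly {} a {}) ^ 4"
    by (intro mult_right_mono) simp_all
  then have "(subset_poly {} a {}) ^ 4 \<le> 9 ^ k * ((subset_poly {} a {})\<^sup>2)\<^sup>2"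
    by (simp flip: power_mult)
  then show ?case
    by (simp add: cube_avg_def)
next
  case (insert w A)
  let ?g = "subset_poly A (coeff_avg w a)" and ?h = "subset_poly A (coeff_halfdiff w a)"
  have IH_g: "cube_avg A (\<lambda>X. (?g X) ^ 4) \<le> 9 ^ k * (cube_avg A (\<lambda>X. (?g X)\<^sup>2))\<^sup>2"
    using insert.IH coeffs_degree_le_coeff_avg[OF insert.hyps insert.prems] by blast
  show ?case
  proof (cases k)
    case 0
    have "?h X = 0" for X
      unfolding subset_poly_def using coeff_halfdiff_degree_0[OF insert(1) insert.prems[unfolded 0]]
      by (intro sum.neutral) auto
    then show ?thesis
      using IH_g by (simp add: cube_avg_subset_poly_power2_insert[OF insert.hyps]
          cube_avg_subset_poly_power4_insert[OF insert.hyps] cube_avg_const[OF insert(1)])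
  next
    case (Suc k')
    have IH_h: "cube_avg A (\<lambda>X. (?h X) ^ 4) \<le> 9 ^ k' * (cube_avg A (\<lambda>X. (?h X)\<^sup>2))\<^sup>2"
      using insert.IH coeffs_degree_le_coeff_halfdiff[OF insert.hyps insert.prems[unfolded Suc]]
      by blast
    have CS: "(cube_avg A (\<lambda>X. (?g X)\<^sup>2 * (?h X)\<^sup>2))\<^sup>2
        \<le> cube_avg A (\<lambda>X. (?g X) ^ 4) * cube_avg A (\<lambda>X. (?h X) ^ 4)"
      using cube_avg_Cauchy_Schwarz[of A "\<lambda>X. (?g X)\<^sup>2" "\<lambda>X. (?h X)\<^sup>2"]
      by (simp flip: power_mult)
    have "cube_avg A (\<lambda>X. (?g X) ^ 4) + 6 * cube_avg A (\<lambda>X. (?g X)\<^sup>2 * (?h X)\<^sup>2)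
        + cube_avg A (\<lambda>X. (?h X) ^ 4)
        \<le> 9 ^ Suc k' * (cube_avg A (\<lambda>X. (?g X)\<^sup>2) + cube_avg A (\<lambda>X. (?h X)\<^sup>2))\<^sup>2"
      by (rule bonami_step[OF _ _ _ IH_g[unfolded Suc] IH_h CS])
        (simp_all add: cube_avg_nonneg[OF insert(1)])
    then show ?thesis
      unfolding cube_avg_subset_poly_power2_insert[OF insert.hyps]
        cube_avg_subset_poly_power4_insert[OF insert.hyps] Suc .
  qed
qed

lemma sum_Pow_insert_top_coeffs:
  assumes "finite A" "w \<notin> A" "coeffs_degree_le (insert w A) k a"
  shows "(\<Sum>S\<in>Pow (insert w A). if card S = k then (a S)\<^sup>2 else 0)
    = (\<Sum>S\<in>Pow A. if card S = k then (coeff_avg w a S)\<^sup>2 else 0)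
      + (\<Sum>S\<in>Pow A. if Suc (card S) = k then (a (insert w S))\<^sup>2 else 0)"
proof -
  have card_insert_w: "card (insert w S) = Suc (card S)" if "S \<in> Pow A" for S
    using assms(1,2) that by (meson PowD card_insert_disjoint finite_subset subsetD)
  have "(\<Sum>S\<in>Pow (insert w A). if card S = k then (a S)\<^sup>2 else 0)
      = (\<Sum>S\<in>Pow A. if card S = k then (a S)\<^sup>2 else 0)
        + (\<Sum>S\<in>Pow A. if Suc (card S) = k then (a (insert w S))\<^sup>2 else 0)"
    unfolding sum_Pow_insert[OF assms(1,2)] sum.distrib[symmetric]
    by (intro sum.cong refl) (simp add: card_insert_w)
  also have "(\<Sum>S\<in>Pow A. if card S = k then (a S)\<^sup>2 else 0)
      = (\<Sum>S\<in>Pow A. if card S = k then (coeff_avg w a S)\<^sup>2 else 0)"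
  proof (intro sum.cong refl)
    fix S assume S: "S \<in> Pow A"
    have "a (insert w S) = 0" if "card S = k"
    proof -
      have "insert w S \<subseteq> insert w A" "k < card (insert w S)"
        using S that card_insert_w[OF S] by auto
      then show ?thesis
        using assms(3) unfolding coeffs_degree_le_def by simp
    qed
    then show "(if card S = k then (a S)\<^sup>2 else 0) = (if card S = k then (coeff_avg w a S)\<^sup>2 else 0)"
      by (simp add: coeff_avg_def)
  qed
  finally show ?thesis .
qed

lemma top_coeffs_le_second_moment:
  assumes "finite A" "coeffs_degree_le A k a"
  shows "(1/4) ^ k * (\<Sum>S\<in>Pow A. if card S = k then (a S)\<^sup>2 else 0)
           \<le> cube_avg A (\<lambda>X. (subset_poly A a X)\<^sup>2)"
  using assms
proof (induction A arbitrary: a k rule: finite_induct)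
  case empty
  show ?case
    by (cases k) (auto simp: cube_avg_def subset_poly_def)
next
  case (insert w A)
  let ?g = "coeff_avg w a" and ?h = "coeff_halfdiff w a"
  have IH_g: "(1/4) ^ k * (\<Sum>S\<in>Pow A. if card S = k then (?g S)\<^sup>2 else 0)
      \<le> cube_avg A (\<lambda>X. (subset_poly A ?g X)\<^sup>2)"
    using insert.IH coeffs_degree_le_coeff_avg[OF insert.hyps insert.prems] by blast
  have h_nonneg: "0 \<le> cube_avg A (\<lambda>X. (subset_poly A ?h X)\<^sup>2)"
    by (rule cube_avg_nonneg[OF insert(1)]) simp
  note split = sum_Pow_insert_top_coeffs[OF insert.hyps insert.prems]
  show ?case
  proof (cases k)
    case 0
    then show ?thesis
      using split IH_g h_nonneg by (simp add: cube_avg_subset_poly_power2_insert[OF insert.hyps])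
  next
    case (Suc k')
    have "(1/4) ^ k' * (\<Sum>S\<in>Pow A. if card S = k' then (?h S)\<^sup>2 else 0)
        \<le> cube_avg A (\<lambda>X. (subset_poly A ?h X)\<^sup>2)"
      using insert.IH coeffs_degree_le_coeff_halfdiff[OF insert.hyps insert.prems[unfolded Suc]]
      by blast
    moreover have "(\<Sum>S\<in>Pow A. if card S = k' then (?h S)\<^sup>2 else 0)
        = (1/4) * (\<Sum>S\<in>Pow A. if Suc (card S) = k then (a (insert w S))\<^sup>2 else 0)"
      unfolding sum_distrib_left coeff_halfdiff_def Suc
      by (intro sum.cong) (auto simp: power2_eq_square)
    ultimately show ?thesis
      using split IH_g unfolding cube_avg_subset_poly_power2_insert[OF insert.hyps] Suc
      by (simp add: algebra_simps)
  qed
qed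

lemma subset_poly_second_moment_le_first_moment:
  assumes "finite A" "coeffs_degree_le A k a"
  shows "sqrt (cube_avg A (\<lambda>X. (subset_poly A a X)\<^sup>2)) \<le> 3 ^ k * cube_avg A (\<lambda>X. \<bar>subset_poly A a X\<bar>)"
proof (rule cube_avg_abs_ge_of_fourth_moment[OF assms(1)])
  have "(3 ^ k)\<^sup>2 = (9::real) ^ k"
    by (simp add: power2_eq_square flip: power_mult_distrib)
  then show "cube_avg A (\<lambda>X. (subset_poly A a X) ^ 4)
      \<le> (3 ^ k)\<^sup>2 * (cube_avg A (\<lambda>X. (subset_poly A a X)\<^sup>2))\<^sup>2"
    using bonami[OF assms] by simp
qed simp

section \<open>Discrepancy as a sum of edge deviations\<close>

definition edge_deviation :: "nat \<Rightarrow> 'a set \<Rightarrow> 'a set set \<Rightarrow> 'a set \<Rightarrow> real" where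
  "edge_deviation r V E T = of_bool (T \<in> E) - hg_density r V E"

definition r_subsets :: "nat \<Rightarrow> 'a set \<Rightarrow> 'a set set" where
  "r_subsets r U = {T. T \<subseteq> U \<and> card T = r}"

definition hg_degree :: "'a set set \<Rightarrow> 'a \<Rightarrow> nat" where
  "hg_degree E v = card {e \<in> E. v \<in> e}"

lemma finite_r_subsets: "finite U \<Longrightarrow> finite (r_subsets r U)"
  unfolding r_subsets_def by (rule finite_subset[of _ "Pow U"]) auto

lemma card_r_subsets: "finite U \<Longrightarrow> card (r_subsets r U) = card U choose r"
  unfolding r_subsets_def by (rule n_subsets)

lemma uniform_hypergraph_edges_subset:
  "uniform_hypergraph r V E \<Longrightarrow> E \<subseteq> r_subsets r V"
  unfolding uniform_hypergraph_def r_subsets_def by auto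

lemma uniform_hypergraph_finite_edges:
  "uniform_hypergraph r V E \<Longrightarrow> finite E"
  using uniform_hypergraph_edges_subset finite_r_subsets finite_subset
  unfolding uniform_hypergraph_def by metis

lemma hg_disc_set_eq_sum_edge_deviation:
  assumes H: "uniform_hypergraph r V E" and U: "U \<subseteq> V"
  shows "hg_disc_set r V E U = (\<Sum>T\<in>r_subsets r U. edge_deviation r V E T)"
proof -
  have fU: "finite U"
    using H U finite_subset unfolding uniform_hypergraph_def by blast
  have "{e \<in> E. e \<subseteq> U} = r_subsets r U \<inter> {T. T \<in> E}"
    using H unfolding uniform_hypergraph_def r_subsets_def by auto
  then show ?thesis
    unfolding hg_disc_set_def hg_edges_in_def edge_deviation_def
    by (simp add: sum_subtractf finite_r_subsets[OF fU] card_r_subsets[OF fU])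
qed

lemma abs_hg_disc_set_le_hg_disc:
  assumes "uniform_hypergraph r V E" "U \<subseteq> V"
  shows "\<bar>hg_disc_set r V E U\<bar> \<le> hg_disc r V E"
  using assms unfolding hg_disc_def uniform_hypergraph_def by (intro Max_ge) auto

lemma hg_disc_nonneg: "uniform_hypergraph r V E \<Longrightarrow> 0 \<le> hg_disc r V E"
  using abs_hg_disc_set_le_hg_disc[of r V E "{}"] by simp

lemma sum_card_containing_eq_sum_card_Int:
  assumes "finite F" "finite S"
  shows "(\<Sum>v\<in>S. real (card {T \<in> F. v \<in> T})) = (\<Sum>T\<in>F. real (card (T \<inter> S)))"
proof -
  have "(\<Sum>v\<in>S. real (card {T \<in> F. v \<in> T})) = (\<Sum>v\<in>S. \<Sum>T\<in>F. of_bool (v \<in> T))"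
    using assms(1) by (simp add: Collect_conj_eq Int_commute)
  also have "\<dots> = (\<Sum>T\<in>F. \<Sum>v\<in>S. of_bool (v \<in> T))"
    by (rule sum.swap)
  also have "\<dots> = (\<Sum>T\<in>F. real (card (T \<inter> S)))"
    using assms(2) by (simp add: Int_commute Int_def)
  finally show ?thesis .
qed

lemma card_r_subsets_containing_le:
  assumes "finite V" "v \<in> V"
  shows "card {T \<in> r_subsets r V. v \<in> T} \<le> (card V - 1) choose (r - 1)"
proof -
  have "inj_on (\<lambda>T. T - {v}) {T \<in> r_subsets r V. v \<in> T}"
    by (rule inj_onI) (metis (no_types, lifting) insert_Diff mem_Collect_eq)
  moreover have "(\<lambda>T. T - {v}) ` {T \<in> r_subsets r V. v \<in> T} \<subseteq> r_subsets (r - 1) (V - {v})"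
    using assms(1) by (auto simp: r_subsets_def dest: finite_subset)
  ultimately have "card {T \<in> r_subsets r V. v \<in> T} \<le> card (r_subsets (r - 1) (V - {v}))"
    using assms(1) by (simp add: card_image[symmetric] card_mono finite_r_subsets)
  also have "\<dots> = (card V - 1) choose (r - 1)"
    using assms by (simp add: card_r_subsets)
  finally show ?thesis .
qed

lemma sum_hg_degree:
  assumes H: "uniform_hypergraph r V E"
  shows "(\<Sum>v\<in>V. real (hg_degree E v)) = hg_avg_degree r V E * real (card V)"
proof -
  have fV: "finite V" and fE: "finite E"
    using H uniform_hypergraph_finite_edges unfolding uniform_hypergraph_def by auto
  have "(\<Sum>v\<in>V. real (hg_degree E v)) = (\<Sum>e\<in>E. real (card (e \<inter> V)))"
    unfolding hg_degree_def by (rule sum_card_containing_eq_sum_card_Int[OF fE fV])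
  also have "\<dots> = real r * real (card E)"
    using H unfolding uniform_hypergraph_def by (simp add: Int_absorb2)
  also have "\<dots> = hg_avg_degree r V E * real (card V)"
  proof (cases "V = {}")
    case True
    then have "E \<subseteq> {{}}" and "r \<noteq> 0 \<Longrightarrow> E = {}"
      using H unfolding uniform_hypergraph_def by auto
    then show ?thesis
      using True by (cases "r = 0") (auto simp: hg_avg_degree_def)
  qed (simp add: hg_avg_degree_def fV)
  finally show ?thesis .
qed

lemma hg_density_mult_choose:
  assumes H: "uniform_hypergraph r V E"
  shows "hg_density r V E * real (card V choose r) = real (card E)"
proof (cases "card V choose r = 0")
  case True
  then have "E = {}"
    using uniform_hypergraph_edges_subset[OF H] card_r_subsets[of V r] H
      finite_r_subsets[of V r] unfolding uniform_hypergraph_def by (metis card_0_eq subset_empty)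
  then show ?thesis
    by (simp add: hg_density_def)
qed (simp add: hg_density_def)

lemma hg_density_mult_choose_pred:
  assumes H: "uniform_hypergraph r V E" and r: "1 \<le> r"
  shows "hg_density r V E * real ((card V - 1) choose (r - 1)) = hg_avg_degree r V E"
proof (cases "E = {}")
  case True
  then show ?thesis
    by (simp add: hg_density_def hg_avg_degree_def)
next
  case False
  then obtain e where "e \<in> E"
    by blast
  then have "r \<le> card V"
    using H unfolding uniform_hypergraph_def by (metis card_mono)
  then have pos: "0 < card V" "0 < card V choose r"
    using r by auto
  have "real r * real (card V choose r) = real (card V) * real ((card V - 1) choose (r - 1))"
    using r times_binomial_minus1_eq[of r "card V"] by (simp flip: of_nat_mult)
  then show ?thesis
    using pos unfolding hg_density_def hg_avg_degree_def by (simp add: field_simps)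
qed

lemma hg_density_le_half:
  assumes H: "uniform_hypergraph r V E" and r: "1 \<le> r"
    and d: "1 \<le> hg_avg_degree r V E" "hg_avg_degree r V E \<le> real (card V - 1 choose (r - 1)) / 2"
  shows "hg_density r V E \<le> 1/2"
proof -
  have "hg_density r V E * real ((card V - 1) choose (r - 1)) \<le> 1/2 * real ((card V - 1) choose (r - 1))"
    using hg_density_mult_choose_pred[OF H r] d(2) by simp
  moreover have "0 < real ((card V - 1) choose (r - 1))"
    using d by linarith
  ultimately show ?thesis
    by simp
qed

section \<open>Vertices of large degree\<close>

lemma cube_avg_hg_disc_set_union:
  assumes H: "uniform_hypergraph r V E" and S: "S \<subseteq> V"
  shows "cube_avg (V - S) (\<lambda>R. hg_disc_set r V E (S \<union> R))
           = (\<Sum>T\<in>r_subsets r V. edge_deviation r V E T * (1/2) ^ card (T - S))"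
proof -
  have fV: "finite V"
    using H unfolding uniform_hypergraph_def by auto
  have "hg_disc_set r V E (S \<union> R)
      = (\<Sum>T\<in>r_subsets r V. edge_deviation r V E T * of_bool (T - S \<subseteq> R))"
    if R: "R \<subseteq> V - S" for R
  proof -
    have "r_subsets r V \<inter> {T. T - S \<subseteq> R} = r_subsets r (S \<union> R)"
      using R S unfolding r_subsets_def by auto
    moreover have "S \<union> R \<subseteq> V"
      using R S by auto
    ultimately show ?thesis
      using hg_disc_set_eq_sum_edge_deviation[OF H]
      by (simp add: sum_mult_of_bool_eq[OF finite_r_subsets[OF fV]])
  qed
  then have "cube_avg (V - S) (\<lambda>R. hg_disc_set r V E (S \<union> R))
      = cube_avg (V - S) (\<lambda>R. \<Sum>T\<in>r_subsets r V. edge_deviation r V E T * of_bool (T - S \<subseteq> R))"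
    by (rule cube_avg_cong)
  also have "\<dots> = (\<Sum>T\<in>r_subsets r V.
      edge_deviation r V E T * cube_avg (V - S) (\<lambda>R. of_bool (T - S \<subseteq> R)))"
    by (simp only: cube_avg_sum[OF finite_r_subsets[OF fV]] cube_avg_cmult)
  also have "\<dots> = (\<Sum>T\<in>r_subsets r V. edge_deviation r V E T * (1/2) ^ card (T - S))"
  proof (intro sum.cong refl)
    fix T assume "T \<in> r_subsets r V"
    then have "T - S \<subseteq> V - S"
      by (auto simp: r_subsets_def)
    then show "edge_deviation r V E T * cube_avg (V - S) (\<lambda>R. of_bool (T - S \<subseteq> R))
        = edge_deviation r V E T * (1/2) ^ card (T - S)"
      using fV by (simp add: cube_avg_indicator_subset)
  qed
  finally show ?thesis .
qed

lemma half_power_card_Diff_bounds: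
  assumes "finite T" "card T = r"
  shows "(1/2) ^ r * (1 + real (card (T \<inter> S))) \<le> (1/2::real) ^ card (T - S)"
    and "(1/2::real) ^ card (T - S) \<le> (1/2) ^ r + real (card (T \<inter> S))"
proof -
  have "r = card (T \<inter> S) + card (T - S)"
    using assms card_Int_Diff[of T S] by simp
  then have weight: "(1/2::real) ^ r * 2 ^ card (T \<inter> S) = (1/2) ^ card (T - S)"
    by (simp add: power_add power_one_over)
  have "1 + real (card (T \<inter> S)) \<le> 2 ^ card (T \<inter> S)"
    using less_exp[of "card (T \<inter> S)"] by (simp add: Suc_leI flip: of_nat_Suc of_nat_le_iff)
  then show "(1/2) ^ r * (1 + real (card (T \<inter> S))) \<le> (1/2::real) ^ card (T - S)"
    unfolding weight[symmetric] by (rule mult_left_mono) simp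
  show "(1/2::real) ^ card (T - S) \<le> (1/2) ^ r + real (card (T \<inter> S))"
  proof (cases "T \<inter> S = {}")
    case True
    then show ?thesis
      using assms by (simp add: Diff_triv)
  next
    case False
    then have "1 \<le> card (T \<inter> S)"
      using assms by (simp add: Suc_le_eq card_gt_0_iff)
    moreover have "(1/2::real) ^ card (T - S) \<le> 1"
      by (simp add: power_le_one)
    ultimately show ?thesis
      by (simp add: add_increasing)
  qed
qed

lemma sum_half_power_card_Diff_le:
  assumes fV: "finite V" and S: "S \<subseteq> V"
  shows "(\<Sum>T\<in>r_subsets r V. (1/2::real) ^ card (T - S))
    \<le> (1/2) ^ r * real (card V choose r) + real (card S) * ((card V - 1) choose (r - 1))"
proof -
  have fS: "finite S"
    using fV S by (rule rev_finite_subset)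
  have "(\<Sum>T\<in>r_subsets r V. (1/2::real) ^ card (T - S))
      \<le> (\<Sum>T\<in>r_subsets r V. (1/2) ^ r + real (card (T \<inter> S)))"
    using fV finite_subset
    by (intro sum_mono half_power_card_Diff_bounds(2)) (auto simp: r_subsets_def)
  also have "\<dots> = (1/2) ^ r * real (card V choose r) + (\<Sum>v\<in>S. real (card {T \<in> r_subsets r V. v \<in> T}))"
    by (simp add: sum.distrib card_r_subsets[OF fV] finite_r_subsets[OF fV] fS
        sum_card_containing_eq_sum_card_Int)
  also have "\<dots> \<le> (1/2) ^ r * real (card V choose r) + real (card S) * ((card V - 1) choose (r - 1))"
    using sum_mono[of S "\<lambda>v. real (card {T \<in> r_subsets r V. v \<in> T})"
        "\<lambda>_. real ((card V - 1) choose (r - 1))"] card_r_subsets_containing_le[OF fV] S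
    by (auto simp: subset_iff)
  finally show ?thesis .
qed

lemma sum_edge_deviation_half_power_ge:
  assumes H: "uniform_hypergraph r V E" and r: "1 \<le> r" and S: "S \<subseteq> V"
  shows "(1/2) ^ r * (\<Sum>v\<in>S. real (hg_degree E v)) - real (card S) * hg_avg_degree r V E
           \<le> (\<Sum>T\<in>r_subsets r V. edge_deviation r V E T * (1/2) ^ card (T - S))"
proof -
  define p where "p = hg_density r V E"
  define w where "w T = (1/2::real) ^ card (T - S)" for T
  have fV: "finite V" and fE: "finite E" and fS: "finite S"
    using H S uniform_hypergraph_finite_edges finite_subset unfolding uniform_hypergraph_def by auto
  have E: "E \<subseteq> r_subsets r V"
    using uniform_hypergraph_edges_subset[OF H] .
  have fin_T: "finite T" "card T = r" if "T \<in> r_subsets r V" for T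
    using that fV finite_subset unfolding r_subsets_def by auto
  have p0: "0 \<le> p"
    unfolding p_def hg_density_def by simp
  have "(\<Sum>T\<in>r_subsets r V. edge_deviation r V E T * w T)
      = (\<Sum>e\<in>E. w e) - p * (\<Sum>T\<in>r_subsets r V. w T)"
    using E unfolding edge_deviation_def p_def
    by (simp add: left_diff_distrib sum_subtractf sum_distrib_left sum.inter_restrict[symmetric]
        finite_r_subsets[OF fV] Int_absorb1 flip: sum_mult_of_bool_eq)
  moreover have "(1/2) ^ r * real (card E) + (1/2) ^ r * (\<Sum>v\<in>S. real (hg_degree E v))
      \<le> (\<Sum>e\<in>E. w e)"
  proof -
    have "(1/2) ^ r * real (card E) + (1/2) ^ r * (\<Sum>v\<in>S. real (hg_degree E v))
        = (\<Sum>e\<in>E. (1/2) ^ r * (1 + real (card (e \<inter> S))))"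
      unfolding hg_degree_def sum_card_containing_eq_sum_card_Int[OF fE fS]
      by (simp add: distrib_left sum.distrib sum_distrib_left)
    also have "\<dots> \<le> (\<Sum>e\<in>E. w e)"
      unfolding w_def using E fin_T by (intro sum_mono half_power_card_Diff_bounds(1)) auto
    finally show ?thesis .
  qed
  moreover have "p * (\<Sum>T\<in>r_subsets r V. w T)
      \<le> (1/2) ^ r * real (card E) + real (card S) * hg_avg_degree r V E"
  proof -
    have "p * (\<Sum>T\<in>r_subsets r V. w T)
        \<le> p * ((1/2) ^ r * real (card V choose r) + real (card S) * ((card V - 1) choose (r - 1)))"
      unfolding w_def using sum_half_power_card_Diff_le[OF fV S] p0 by (rule mult_left_mono)
    also have "\<dots> = (1/2) ^ r * (p * real (card V choose r))
        + real (card S) * (p * real ((card V - 1) choose (r - 1)))"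
      by (simp add: algebra_simps)
    finally show ?thesis
      using hg_density_mult_choose[OF H] hg_density_mult_choose_pred[OF H r]
      unfolding p_def by simp
  qed
  ultimately show ?thesis
    unfolding w_def by linarith
qed

text \<open>Average the discrepancy of \<open>S \<union> R\<close> over a uniformly random \<open>R \<subseteq> V - S\<close>.\<close>

lemma hg_disc_ge_degree_sum:
  assumes H: "uniform_hypergraph r V E" and r: "1 \<le> r" and S: "S \<subseteq> V"
  shows "(1/2) ^ r * (\<Sum>v\<in>S. real (hg_degree E v)) - real (card S) * hg_avg_degree r V E
           \<le> hg_disc r V E"
proof -
  have "cube_avg (V - S) (\<lambda>R. hg_disc_set r V E (S \<union> R)) \<le> hg_disc r V E"
  proof (rule cube_avg_le)
    show "finite (V - S)"
      using H unfolding uniform_hypergraph_def by simp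
    show "hg_disc_set r V E (S \<union> R) \<le> hg_disc r V E" if "R \<subseteq> V - S" for R
    proof -
      have "S \<union> R \<subseteq> V"
        using that S by auto
      then show ?thesis
        using abs_hg_disc_set_le_hg_disc[OF H] by (meson abs_le_D1)
    qed
  qed
  then show ?thesis
    using sum_edge_deviation_half_power_ge[OF H r S] cube_avg_hg_disc_set_union[OF H S] by simp
qed

lemma hg_disc_ge_of_heavy_vertices:
  assumes H: "uniform_hypergraph r V E" and r: "1 \<le> r"
    and heavy: "hg_avg_degree r V E * real (card V) / 2
      \<le> (\<Sum>v\<in>{v \<in> V. 2 ^ (r + 2) * hg_avg_degree r V E \<le> real (hg_degree E v)}. real (hg_degree E v))"
  shows "hg_avg_degree r V E * real (card V) / 2 ^ (r + 2) \<le> hg_disc r V E"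
proof -
  define d where "d = hg_avg_degree r V E"
  define S where "S = {v \<in> V. 2 ^ (r + 2) * d \<le> real (hg_degree E v)}"
  have fV: "finite V"
    using H unfolding uniform_hypergraph_def by auto
  have "real (card S) * (2 ^ (r + 2) * d) \<le> (\<Sum>v\<in>S. real (hg_degree E v))"
    using sum_mono[of S "\<lambda>_. 2 ^ (r + 2) * d" "\<lambda>v. real (hg_degree E v)"]
    unfolding S_def by simp
  also have "\<dots> \<le> (\<Sum>v\<in>V. real (hg_degree E v))"
    using fV by (intro sum_mono2) (auto simp: S_def)
  also have "\<dots> = d * real (card V)"
    unfolding d_def by (rule sum_hg_degree[OF H])
  finally have "real (card S) * d \<le> d * real (card V) / 2 ^ (r + 2)"
    by (simp add: field_simps)
  moreover have "(1/2) ^ r * (d * real (card V) / 2) \<le> (1/2) ^ r * (\<Sum>v\<in>S. real (hg_degree E v))"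
    using heavy unfolding d_def[symmetric] S_def[symmetric] by (rule mult_left_mono) simp
  moreover have "(1/2) ^ r * (d * real (card V) / 2) - d * real (card V) / 2 ^ (r + 2)
      = d * real (card V) / 2 ^ (r + 2)"
    by (simp add: field_simps power_add)
  moreover have "S \<subseteq> V"
    unfolding S_def by blast
  ultimately show ?thesis
    using hg_disc_ge_degree_sum[OF H r, of S] unfolding d_def by linarith
qed

section \<open>Rainbow sums\<close>

lemma prod_of_bool_real:
  "finite A \<Longrightarrow> (\<Prod>x\<in>A. of_bool (P x)) = (of_bool (\<forall>x\<in>A. P x) :: real)"
  by (cases "\<forall>x\<in>A. P x") (auto simp: prod_zero_iff)

lemma sum_Pow_alternating_superset:
  assumes "finite N" "K \<subseteq> N"
  shows "(\<Sum>J\<in>Pow N. (-1::real) ^ card (N - J) * of_bool (K \<subseteq> J)) = of_bool (K = N)"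
proof -
  have "(of_bool (K = N) :: real) = (\<Prod>x\<in>N. of_bool (x \<in> K))"
    using assms by (auto simp: prod_of_bool_real)
  also have "\<dots> = (\<Prod>x\<in>N. 1 - of_bool (x \<notin> K))"
    by (intro prod.cong) auto
  also have "\<dots> = (\<Sum>J\<in>Pow N. (-1) ^ (card N - card J) * (\<Prod>x\<in>J. 1) * (\<Prod>x\<in>N - J. of_bool (x \<notin> K)))"
    by (rule prod_diff_conv_sum'[OF assms(1)])
  also have "\<dots> = (\<Sum>J\<in>Pow N. (-1) ^ card (N - J) * of_bool (K \<subseteq> J))"
  proof (intro sum.cong refl)
    fix J assume "J \<in> Pow N"
    then have "card (N - J) = card N - card J" "(\<forall>x\<in>N - J. x \<notin> K) = (K \<subseteq> J)"
      using assms by (auto simp: card_Diff_subset finite_subset)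
    then show "(-1) ^ (card N - card J) * (\<Prod>x\<in>J. 1) * (\<Prod>x\<in>N - J. of_bool (x \<notin> K))
        = (-1) ^ card (N - J) * (of_bool (K \<subseteq> J) :: real)"
      using assms(1) by (simp add: prod_of_bool_real)
  qed
  finally show ?thesis ..
qed

definition rainbow_sum :: "nat \<Rightarrow> 'a set \<Rightarrow> 'a set set \<Rightarrow> ('a \<Rightarrow> nat) \<Rightarrow> 'a set \<Rightarrow> real" where
  "rainbow_sum r V E \<kappa> Z = (\<Sum>T\<in>{T \<in> r_subsets r Z. \<kappa> ` T = {..<r}}. edge_deviation r V E T)"

lemma rainbow_sum_eq_alternating_sum:
  assumes H: "uniform_hypergraph r V E" and Z: "Z \<subseteq> V" and col: "\<forall>v\<in>V. \<kappa> v < r"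
  shows "rainbow_sum r V E \<kappa> Z
    = (\<Sum>J\<in>Pow {..<r}. (-1) ^ card ({..<r} - J) * hg_disc_set r V E {z \<in> Z. \<kappa> z \<in> J})"
proof -
  have fin: "finite (r_subsets r Z)"
    using H Z unfolding uniform_hypergraph_def by (meson finite_r_subsets finite_subset)
  have "{T \<in> r_subsets r Z. \<kappa> ` T = {..<r}} = r_subsets r Z \<inter> {T. \<kappa> ` T = {..<r}}"
    by blast
  then have "rainbow_sum r V E \<kappa> Z
      = (\<Sum>T\<in>r_subsets r Z. edge_deviation r V E T * of_bool (\<kappa> ` T = {..<r}))"
    by (simp only: rainbow_sum_def sum_mult_of_bool_eq[OF fin])
  also have "\<dots> = (\<Sum>T\<in>r_subsets r Z. edge_deviation r V E T
      * (\<Sum>J\<in>Pow {..<r}. (-1) ^ card ({..<r} - J) * of_bool (\<kappa> ` T \<subseteq> J)))"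
  proof (intro sum.cong refl)
    fix T assume "T \<in> r_subsets r Z"
    then have "\<kappa> ` T \<subseteq> {..<r}"
      using Z col unfolding r_subsets_def by auto
    then show "edge_deviation r V E T * of_bool (\<kappa> ` T = {..<r})
        = edge_deviation r V E T * (\<Sum>J\<in>Pow {..<r}. (-1) ^ card ({..<r} - J) * of_bool (\<kappa> ` T \<subseteq> J))"
      by (simp only: sum_Pow_alternating_superset[OF finite_lessThan])
  qed
  also have "\<dots> = (\<Sum>J\<in>Pow {..<r}. (-1) ^ card ({..<r} - J)
      * (\<Sum>T\<in>r_subsets r Z. edge_deviation r V E T * of_bool (\<kappa> ` T \<subseteq> J)))"
    by (simp only: sum_distrib_left sum.swap[of _ "r_subsets r Z"] mult.left_commute)
  also have "\<dots> = (\<Sum>J\<in>Pow {..<r}. (-1) ^ card ({..<r} - J) * hg_disc_set r V E {z \<in> Z. \<kappa> z \<in> J})"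
  proof (intro sum.cong refl)
    fix J
    have "r_subsets r Z \<inter> {T. \<kappa> ` T \<subseteq> J} = r_subsets r {z \<in> Z. \<kappa> z \<in> J}"
      unfolding r_subsets_def by auto
    moreover have "{z \<in> Z. \<kappa> z \<in> J} \<subseteq> V"
      using Z by auto
    ultimately show "(-1) ^ card ({..<r} - J) * (\<Sum>T\<in>r_subsets r Z. edge_deviation r V E T * of_bool (\<kappa> ` T \<subseteq> J))
        = (-1) ^ card ({..<r} - J) * hg_disc_set r V E {z \<in> Z. \<kappa> z \<in> J}"
      using fin by (simp add: sum_mult_of_bool_eq hg_disc_set_eq_sum_edge_deviation[OF H])
  qed
  finally show ?thesis .
qed

lemma abs_rainbow_sum_le:
  assumes H: "uniform_hypergraph r V E" and Z: "Z \<subseteq> V" and col: "\<forall>v\<in>V. \<kappa> v < r"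
  shows "\<bar>rainbow_sum r V E \<kappa> Z\<bar> \<le> 2 ^ r * hg_disc r V E"
proof -
  have "\<bar>rainbow_sum r V E \<kappa> Z\<bar>
      \<le> (\<Sum>J\<in>Pow {..<r}. \<bar>(-1) ^ card ({..<r} - J) * hg_disc_set r V E {z \<in> Z. \<kappa> z \<in> J}\<bar>)"
    unfolding rainbow_sum_eq_alternating_sum[OF assms] by (rule sum_abs)
  also have "\<dots> \<le> (\<Sum>J\<in>Pow {..<r}. hg_disc r V E)"
    using Z by (intro sum_mono) (auto simp: abs_mult intro!: abs_hg_disc_set_le_hg_disc[OF H])
  also have "\<dots> = 2 ^ r * hg_disc r V E"
    by (simp add: card_Pow)
  finally show ?thesis .
qed

text \<open>Fix the colour class \<open>0\<close>. A rainbow set meeting it in \<open>v\<close> is \<open>insert v S\<close> with \<open>S\<close> a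
  rainbow \<open>(r - 1)\<close>-set of the positive colours; as a function of the positive-coloured part
  \<open>X\<close> of \<open>Z\<close>, the contribution of \<open>v\<close> to the rainbow sum is a polynomial of degree \<open>r - 1\<close>.\<close>

definition pos_coloured :: "'a set \<Rightarrow> ('a \<Rightarrow> nat) \<Rightarrow> 'a set" where
  "pos_coloured V \<kappa> = {v \<in> V. \<kappa> v \<noteq> 0}"

definition link_coeff :: "nat \<Rightarrow> 'a set \<Rightarrow> 'a set set \<Rightarrow> ('a \<Rightarrow> nat) \<Rightarrow> 'a \<Rightarrow> 'a set \<Rightarrow> real" where
  "link_coeff r V E \<kappa> v S =
     (if card S = r - 1 \<and> \<kappa> ` S = {1..<r} then edge_deviation r V E (insert v S) else 0)"

lemma coeffs_degree_le_link_coeff: "coeffs_degree_le A (r - 1) (link_coeff r V E \<kappa> v)"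
  unfolding coeffs_degree_le_def link_coeff_def by auto

lemma rainbow_r_subset_split:
  assumes r: "1 \<le> r" and X: "X \<subseteq> pos_coloured V \<kappa>" and W: "W \<subseteq> {v \<in> V. \<kappa> v = 0}"
    and fV: "finite V" and T: "T \<in> r_subsets r (X \<union> W)" "\<kappa> ` T = {..<r}"
  obtains v where "v \<in> T" "v \<in> W" "T - {v} \<in> r_subsets (r - 1) X" "\<kappa> ` (T - {v}) = {1..<r}"
proof -
  have "X \<union> W \<subseteq> V"
    using X W unfolding pos_coloured_def by auto
  then have "T \<subseteq> V"
    using T(1) unfolding r_subsets_def by auto
  then have fT: "finite T"
    using fV by (rule finite_subset)
  then have inj: "inj_on \<kappa> T"
    using T unfolding r_subsets_def by (simp add: inj_on_iff_eq_card)
  obtain v where v: "v \<in> T" "\<kappa> v = 0"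
    using T(2) r by (metis imageE lessThan_iff less_le_trans zero_less_one)
  have "v \<in> W"
    using v T X unfolding r_subsets_def pos_coloured_def by auto
  moreover have "T - {v} \<subseteq> X"
  proof
    fix x assume x: "x \<in> T - {v}"
    show "x \<in> X"
    proof (rule ccontr)
      assume "x \<notin> X"
      then have "\<kappa> x = \<kappa> v"
        using x T(1) W v(2) unfolding r_subsets_def by auto
      then show False
        using inj x v(1) by (auto dest: inj_onD)
    qed
  qed
  moreover have "card (T - {v}) = r - 1"
    using T(1) v fT unfolding r_subsets_def by simp
  moreover have "\<kappa> ` (T - {v}) = {1..<r}"
    using T(2) v inj by (auto simp: inj_on_image_set_diff)
  ultimately show ?thesis
    using that v(1) unfolding r_subsets_def by blast
qed

lemma bij_betw_insert_rainbow:
  assumes r: "1 \<le> r" and X: "X \<subseteq> pos_coloured V \<kappa>" and W: "W \<subseteq> {v \<in> V. \<kappa> v = 0}"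
    and fV: "finite V"
  shows "bij_betw (\<lambda>(v, S). insert v S) (W \<times> {S \<in> r_subsets (r - 1) X. \<kappa> ` S = {1..<r}})
           {T \<in> r_subsets r (X \<union> W). \<kappa> ` T = {..<r}}"
proof -
  define Good where "Good = {S \<in> r_subsets (r - 1) X. \<kappa> ` S = {1..<r}}"
  have "X \<subseteq> V"
    using X unfolding pos_coloured_def by auto
  then have fX: "finite X"
    using fV by (rule finite_subset)
  have not_in_Good: "u \<notin> S" if "u \<in> W" "S \<in> Good" for u S
  proof
    assume "u \<in> S"
    then have "\<kappa> u \<in> {1..<r}"
      using that(2) unfolding Good_def by (metis (mono_tags, lifting) imageI mem_Collect_eq)
    moreover have "\<kappa> u = 0"
      using that(1) W by auto
    ultimately show False
      by simp
  qed
  have "inj_on (\<lambda>(v, S). insert v S) (W \<times> Good)"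
  proof (rule inj_onI, clarify)
    fix v S v' S' assume vS: "v \<in> W" "S \<in> Good" "v' \<in> W" "S' \<in> Good" "insert v S = insert v' S'"
    then have "v = v'"
      using not_in_Good by blast
    then show "v = v' \<and> S = S'"
      using vS not_in_Good by (metis Diff_insert_absorb)
  qed
  moreover have "(\<lambda>(v, S). insert v S) ` (W \<times> Good) \<subseteq> {T \<in> r_subsets r (X \<union> W). \<kappa> ` T = {..<r}}"
  proof
    fix T assume "T \<in> (\<lambda>(v, S). insert v S) ` (W \<times> Good)"
    then obtain v S where vS: "v \<in> W" "S \<in> Good" "T = insert v S"
      by auto
    have S: "S \<subseteq> X" "card S = r - 1" "\<kappa> ` S = {1..<r}"
      using vS(2) unfolding Good_def r_subsets_def by simp_all
    have "finite S" "v \<notin> S" "\<kappa> v = 0"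
      using finite_subset[OF S(1) fX] not_in_Good[OF vS(1,2)] vS(1) W by auto
    with S show "T \<in> {T \<in> r_subsets r (X \<union> W). \<kappa> ` T = {..<r}}"
      using vS r unfolding r_subsets_def by auto
  qed
  moreover have "{T \<in> r_subsets r (X \<union> W). \<kappa> ` T = {..<r}} \<subseteq> (\<lambda>(v, S). insert v S) ` (W \<times> Good)"
  proof clarify
    fix T assume "T \<in> r_subsets r (X \<union> W)" "\<kappa> ` T = {..<r}"
    from rainbow_r_subset_split[OF r X W fV this] obtain v
      where v: "v \<in> T" "v \<in> W" "T - {v} \<in> r_subsets (r - 1) X" "\<kappa> ` (T - {v}) = {1..<r}" .
    then have "T - {v} \<in> Good"
      unfolding Good_def by simp
    then show "T \<in> (\<lambda>(v, S). insert v S) ` (W \<times> Good)"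
      using v(1,2) by (auto intro!: image_eqI[of _ _ "(v, T - {v})"])
  qed
  ultimately show ?thesis
    unfolding bij_betw_def Good_def by blast
qed

lemma rainbow_sum_eq_sum_link_poly:
  assumes H: "uniform_hypergraph r V E" and r: "1 \<le> r"
    and X: "X \<subseteq> pos_coloured V \<kappa>" and W: "W \<subseteq> {v \<in> V. \<kappa> v = 0}"
  shows "rainbow_sum r V E \<kappa> (X \<union> W) = (\<Sum>v\<in>W. subset_poly (pos_coloured V \<kappa>) (link_coeff r V E \<kappa> v) X)"
proof -
  define Good where "Good = {S \<in> r_subsets (r - 1) X. \<kappa> ` S = {1..<r}}"
  have fV: "finite V"
    using H unfolding uniform_hypergraph_def by auto
  have fA: "finite (pos_coloured V \<kappa>)"
    using fV unfolding pos_coloured_def by auto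
  have "W \<subseteq> V"
    using W by auto
  then have fW: "finite W"
    using fV by (rule finite_subset)
  have "subset_poly (pos_coloured V \<kappa>) (link_coeff r V E \<kappa> v) X
      = (\<Sum>S\<in>Good. edge_deviation r V E (insert v S))" for v
  proof -
    have "Good = {S \<in> Pow X. card S = r - 1 \<and> \<kappa> ` S = {1..<r}}"
      unfolding Good_def r_subsets_def by auto
    moreover have "finite (Pow X)"
      using fA X finite_subset by blast
    ultimately show ?thesis
      unfolding subset_poly_eq_sum_Pow[OF fA X] link_coeff_def by (simp only: sum.inter_filter)
  qed
  then have "(\<Sum>v\<in>W. subset_poly (pos_coloured V \<kappa>) (link_coeff r V E \<kappa> v) X)
      = (\<Sum>(v, S)\<in>W \<times> Good. edge_deviation r V E (insert v S))"
    by (simp add: sum.cartesian_product)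
  also have "\<dots> = rainbow_sum r V E \<kappa> (X \<union> W)"
    unfolding rainbow_sum_def Good_def
    using sum.reindex_bij_betw[OF bij_betw_insert_rainbow[OF r X W fV], of "edge_deviation r V E"]
    by (simp add: case_prod_unfold)
  finally show ?thesis ..
qed

text \<open>Splitting the colour class \<open>0\<close> by the sign of the link polynomials at \<open>X\<close> turns the sum
  of their absolute values into a difference of two rainbow sums.\<close>

lemma sum_abs_link_poly_le:
  assumes H: "uniform_hypergraph r V E" and r: "1 \<le> r" and col: "\<forall>v\<in>V. \<kappa> v < r"
    and X: "X \<subseteq> pos_coloured V \<kappa>"
  shows "(\<Sum>v\<in>{v \<in> V. \<kappa> v = 0}. \<bar>subset_poly (pos_coloured V \<kappa>) (link_coeff r V E \<kappa> v) X\<bar>)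
           \<le> 2 * 2 ^ r * hg_disc r V E"
proof -
  define B where "B = {v \<in> V. \<kappa> v = 0}"
  define L where "L v = subset_poly (pos_coloured V \<kappa>) (link_coeff r V E \<kappa> v) X" for v
  define P where "P = {v \<in> B. 0 \<le> L v}"
  have fB: "finite B"
    using H unfolding B_def uniform_hypergraph_def by auto
  have XV: "X \<subseteq> V"
    using X unfolding pos_coloured_def by auto
  have "(\<Sum>v\<in>B. \<bar>L v\<bar>) = (\<Sum>v\<in>P. L v) - (\<Sum>v\<in>B - P. L v)"
  proof -
    have "P \<subseteq> B"
      unfolding P_def by auto
    then have "(\<Sum>v\<in>B. \<bar>L v\<bar>) = (\<Sum>v\<in>B - P. \<bar>L v\<bar>) + (\<Sum>v\<in>P. \<bar>L v\<bar>)"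
      using fB by (rule sum.subset_diff)
    also have "(\<Sum>v\<in>P. \<bar>L v\<bar>) = (\<Sum>v\<in>P. L v)"
      by (rule sum.cong) (auto simp: P_def)
    also have "(\<Sum>v\<in>B - P. \<bar>L v\<bar>) = - (\<Sum>v\<in>B - P. L v)"
      unfolding sum_negf[symmetric] by (rule sum.cong) (auto simp: P_def)
    finally show ?thesis
      by simp
  qed
  also have "\<dots> = rainbow_sum r V E \<kappa> (X \<union> P) - rainbow_sum r V E \<kappa> (X \<union> (B - P))"
  proof -
    have "P \<subseteq> {v \<in> V. \<kappa> v = 0}" "B - P \<subseteq> {v \<in> V. \<kappa> v = 0}"
      unfolding P_def B_def by auto
    then show ?thesis
      unfolding L_def using rainbow_sum_eq_sum_link_poly[OF H r X] by simp
  qed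
  also have "\<dots> \<le> 2 ^ r * hg_disc r V E + 2 ^ r * hg_disc r V E"
  proof -
    have "X \<union> P \<subseteq> V" "X \<union> (B - P) \<subseteq> V"
      using XV unfolding P_def B_def by auto
    from this[THEN abs_rainbow_sum_le[OF H _ col]] show ?thesis
      by linarith
  qed
  finally show ?thesis
    unfolding B_def L_def by (simp add: mult_ac)
qed

lemma sum_cube_avg_abs_link_poly_le:
  assumes H: "uniform_hypergraph r V E" and r: "1 \<le> r" and col: "\<forall>v\<in>V. \<kappa> v < r"
  shows "(\<Sum>v\<in>{v \<in> V. \<kappa> v = 0}.
      cube_avg (pos_coloured V \<kappa>) (\<lambda>X. \<bar>subset_poly (pos_coloured V \<kappa>) (link_coeff r V E \<kappa> v) X\<bar>))
    \<le> 2 * 2 ^ r * hg_disc r V E"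
proof -
  have fV: "finite V"
    using H unfolding uniform_hypergraph_def by auto
  then have "finite (pos_coloured V \<kappa>)"
    unfolding pos_coloured_def by auto
  then show ?thesis
    using sum_abs_link_poly_le[OF H r col] fV
    by (simp flip: cube_avg_sum add: cube_avg_le)
qed

section \<open>Vertices of small degree\<close>

definition rainbow_degree :: "nat \<Rightarrow> 'a set \<Rightarrow> 'a set set \<Rightarrow> ('a \<Rightarrow> nat) \<Rightarrow> 'a \<Rightarrow> nat" where
  "rainbow_degree r V E \<kappa> v =
     card {S \<in> r_subsets (r - 1) (pos_coloured V \<kappa>). \<kappa> ` S = {1..<r} \<and> insert v S \<in> E}"

lemma rainbow_degree_le_top_link_coeffs:
  assumes H: "uniform_hypergraph r V E" and p: "hg_density r V E \<le> 1/2"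
  shows "real (rainbow_degree r V E \<kappa> v)
    \<le> 4 * (\<Sum>S\<in>Pow (pos_coloured V \<kappa>). if card S = r - 1 then (link_coeff r V E \<kappa> v S)\<^sup>2 else 0)"
proof -
  define Good where
    "Good = {S \<in> r_subsets (r - 1) (pos_coloured V \<kappa>). \<kappa> ` S = {1..<r} \<and> insert v S \<in> E}"
  have "(1/4) * real (card Good) = (\<Sum>S\<in>Good. 1/4)"
    by simp
  also have "\<dots> \<le> (\<Sum>S\<in>Good. if card S = r - 1 then (link_coeff r V E \<kappa> v S)\<^sup>2 else 0)"
  proof (rule sum_mono)
    fix S assume S: "S \<in> Good"
    have "(1/2)\<^sup>2 \<le> (1 - hg_density r V E)\<^sup>2"
      using p by (intro power_mono) auto
    then show "1/4 \<le> (if card S = r - 1 then (link_coeff r V E \<kappa> v S)\<^sup>2 else 0)"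
      using S unfolding Good_def link_coeff_def edge_deviation_def r_subsets_def
      by (simp add: power2_eq_square)
  qed
  also have "\<dots> \<le> (\<Sum>S\<in>Pow (pos_coloured V \<kappa>). if card S = r - 1 then (link_coeff r V E \<kappa> v S)\<^sup>2 else 0)"
    using H by (intro sum_mono2) (auto simp: Good_def r_subsets_def pos_coloured_def uniform_hypergraph_def)
  finally show ?thesis
    unfolding rainbow_degree_def Good_def by simp
qed

lemma sqrt_rainbow_degree_le:
  assumes H: "uniform_hypergraph r V E" and r: "1 \<le> r" and p: "hg_density r V E \<le> 1/2"
  shows "sqrt (real (rainbow_degree r V E \<kappa> v))
    \<le> 6 ^ r * cube_avg (pos_coloured V \<kappa>) (\<lambda>X. \<bar>subset_poly (pos_coloured V \<kappa>) (link_coeff r V E \<kappa> v) X\<bar>)"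
proof -
  define A where "A = pos_coloured V \<kappa>"
  define a where "a = link_coeff r V E \<kappa> v"
  have fA: "finite A"
    using H unfolding A_def pos_coloured_def uniform_hypergraph_def by auto
  have deg: "coeffs_degree_le A (r - 1) a"
    unfolding a_def by (rule coeffs_degree_le_link_coeff)
  have "(1/4) ^ (r - 1) * ((1/4) * real (rainbow_degree r V E \<kappa> v))
      \<le> (1/4) ^ (r - 1) * (\<Sum>S\<in>Pow A. if card S = r - 1 then (a S)\<^sup>2 else 0)"
    using rainbow_degree_le_top_link_coeffs[OF H p, of \<kappa> v] unfolding A_def a_def
    by (intro mult_left_mono) (auto simp: mult.commute)
  also have "\<dots> \<le> cube_avg A (\<lambda>X. (subset_poly A a X)\<^sup>2)"
    by (rule top_coeffs_le_second_moment[OF fA deg])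
  finally have "(1/4) ^ (r - 1) * (1/4) * real (rainbow_degree r V E \<kappa> v)
      \<le> cube_avg A (\<lambda>X. (subset_poly A a X)\<^sup>2)"
    by (simp only: mult.assoc)
  moreover have "(1/4::real) ^ (r - 1) * (1/4) = (1/2 ^ r)\<^sup>2"
  proof -
    have "(2::real) ^ r * 2 ^ r = 4 ^ r"
      by (simp flip: power_mult_distrib)
    then show ?thesis
      using r by (simp add: power2_eq_square power_one_over flip: power_Suc2)
  qed
  ultimately have "(sqrt (real (rainbow_degree r V E \<kappa> v)) / 2 ^ r)\<^sup>2 \<le> cube_avg A (\<lambda>X. (subset_poly A a X)\<^sup>2)"
    by (simp add: power_divide)
  then have "sqrt (real (rainbow_degree r V E \<kappa> v)) / 2 ^ r \<le> sqrt (cube_avg A (\<lambda>X. (subset_poly A a X)\<^sup>2))"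
    by (rule real_le_rsqrt)
  also have "\<dots> \<le> 3 ^ (r - 1) * cube_avg A (\<lambda>X. \<bar>subset_poly A a X\<bar>)"
    by (rule subset_poly_second_moment_le_first_moment[OF fA deg])
  also have "\<dots> \<le> 3 ^ r * cube_avg A (\<lambda>X. \<bar>subset_poly A a X\<bar>)"
    by (intro mult_right_mono power_increasing cube_avg_nonneg[OF fA]) auto
  finally have "sqrt (real (rainbow_degree r V E \<kappa> v)) \<le> (2 ^ r * 3 ^ r) * cube_avg A (\<lambda>X. \<bar>subset_poly A a X\<bar>)"
    by (simp add: field_simps)
  then show ?thesis
    unfolding A_def a_def by (simp flip: power_mult_distrib)
qed

lemma rainbow_degree_le_hg_degree:
  assumes H: "uniform_hypergraph r V E" and v: "\<kappa> v = 0"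
  shows "rainbow_degree r V E \<kappa> v \<le> hg_degree E v"
proof -
  define Good where "Good = {S \<in> r_subsets (r - 1) (pos_coloured V \<kappa>). \<kappa> ` S = {1..<r} \<and> insert v S \<in> E}"
  have "v \<notin> S" if "S \<in> Good" for S
  proof -
    have "S \<subseteq> pos_coloured V \<kappa>"
      using that unfolding Good_def r_subsets_def by simp
    then show ?thesis
      using v unfolding pos_coloured_def by auto
  qed
  then have "inj_on (insert v) Good"
    by (intro inj_onI) (metis Diff_insert_absorb)
  moreover have "insert v ` Good \<subseteq> {e \<in> E. v \<in> e}"
    unfolding Good_def by auto
  moreover have "finite {e \<in> E. v \<in> e}"
    using uniform_hypergraph_finite_edges[OF H] by simp
  ultimately have "card (insert v ` Good) \<le> hg_degree E v" "card (insert v ` Good) = card Good"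
    unfolding hg_degree_def by (simp add: card_mono, simp add: card_image)
  then show ?thesis
    unfolding rainbow_degree_def Good_def[symmetric] by simp
qed

lemma sum_sqrt_rainbow_degree_le:
  assumes H: "uniform_hypergraph r V E" and r: "1 \<le> r" and p: "hg_density r V E \<le> 1/2"
    and col: "\<forall>v\<in>V. \<kappa> v < r"
  shows "(\<Sum>v\<in>{v \<in> V. \<kappa> v = 0}. sqrt (real (rainbow_degree r V E \<kappa> v)))
    \<le> 6 ^ r * (2 * 2 ^ r * hg_disc r V E)"
proof -
  have "(\<Sum>v\<in>{v \<in> V. \<kappa> v = 0}. sqrt (real (rainbow_degree r V E \<kappa> v)))
      \<le> (\<Sum>v\<in>{v \<in> V. \<kappa> v = 0}. 6 ^ r * cube_avg (pos_coloured V \<kappa>)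
        (\<lambda>X. \<bar>subset_poly (pos_coloured V \<kappa>) (link_coeff r V E \<kappa> v) X\<bar>))"
    by (intro sum_mono sqrt_rainbow_degree_le[OF H r p])
  also have "\<dots> \<le> 6 ^ r * (2 * 2 ^ r * hg_disc r V E)"
    unfolding sum_distrib_left[symmetric]
    using sum_cube_avg_abs_link_poly_le[OF H r col] by (rule mult_left_mono) simp
  finally show ?thesis .
qed

lemma le_sqrt_mult_sqrt:
  fixes x M :: real
  assumes "0 \<le> x" "x \<le> M"
  shows "x \<le> sqrt M * sqrt x"
proof -
  have "sqrt x * sqrt x \<le> sqrt M * sqrt x"
    using assms by (intro mult_right_mono) auto
  then show ?thesis
    using assms(1) by simp
qed

lemma sum_rainbow_degree_le:
  assumes H: "uniform_hypergraph r V E" and r: "1 \<le> r" and p: "hg_density r V E \<le> 1/2"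
    and col: "\<forall>v\<in>V. \<kappa> v < r" and L: "L \<subseteq> V"
    and M: "0 \<le> M" "\<forall>v\<in>L. real (hg_degree E v) \<le> M"
  shows "(\<Sum>v\<in>L. of_bool (\<kappa> v = 0) * real (rainbow_degree r V E \<kappa> v))
           \<le> sqrt M * (2 * 2 ^ r * 6 ^ r * hg_disc r V E)"
proof -
  define B where "B = {v \<in> V. \<kappa> v = 0}"
  define s where "s v = sqrt (real (rainbow_degree r V E \<kappa> v))" for v
  have fV: "finite V"
    using H unfolding uniform_hypergraph_def by auto
  have "(\<Sum>v\<in>L. of_bool (\<kappa> v = 0) * real (rainbow_degree r V E \<kappa> v))
      = (\<Sum>v\<in>L \<inter> B. real (rainbow_degree r V E \<kappa> v))"
    using L fV finite_subset unfolding B_def by (intro sum.mono_neutral_cong_right) auto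
  also have "\<dots> \<le> (\<Sum>v\<in>L \<inter> B. sqrt M * s v)"
  proof (rule sum_mono)
    fix v assume v: "v \<in> L \<inter> B"
    then have "real (rainbow_degree r V E \<kappa> v) \<le> real (hg_degree E v)"
      using rainbow_degree_le_hg_degree[OF H] unfolding B_def by simp
    also have "\<dots> \<le> M"
      using v M(2) by simp
    finally show "real (rainbow_degree r V E \<kappa> v) \<le> sqrt M * s v"
      unfolding s_def by (intro le_sqrt_mult_sqrt) simp_all
  qed
  also have "\<dots> \<le> sqrt M * (\<Sum>v\<in>B. s v)"
    unfolding sum_distrib_left[symmetric] using fV M(1) unfolding B_def s_def
    by (intro mult_left_mono sum_mono2) auto
  also have "\<dots> \<le> sqrt M * (6 ^ r * (2 * 2 ^ r * hg_disc r V E))"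
    using sum_sqrt_rainbow_degree_le[OF H r p col] M(1) unfolding B_def s_def
    by (intro mult_left_mono) simp_all
  finally show ?thesis
    by (simp add: mult_ac)
qed

lemma card_PiE_Diff_le_card_PiE_agreeing:
  assumes fV: "finite V" and fB: "finite B" and e: "e \<subseteq> V" and \<sigma>: "\<forall>x\<in>e. \<sigma> x \<in> B"
  shows "card ((V - e) \<rightarrow>\<^sub>E B) \<le> card {\<kappa> \<in> V \<rightarrow>\<^sub>E B. \<forall>x\<in>e. \<kappa> x = \<sigma> x}"
proof -
  define extend where "extend \<rho> x = (if x \<in> e then \<sigma> x else \<rho> x)" for \<rho> x
  have sub: "extend ` ((V - e) \<rightarrow>\<^sub>E B) \<subseteq> {\<kappa> \<in> V \<rightarrow>\<^sub>E B. \<forall>x\<in>e. \<kappa> x = \<sigma> x}"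
    using e \<sigma> unfolding extend_def PiE_iff extensional_def by auto
  have inj: "inj_on extend ((V - e) \<rightarrow>\<^sub>E B)"
  proof (rule inj_onI, rule ext)
    fix \<rho> \<rho>' x assume \<rho>: "\<rho> \<in> (V - e) \<rightarrow>\<^sub>E B" "\<rho>' \<in> (V - e) \<rightarrow>\<^sub>E B" "extend \<rho> = extend \<rho>'"
    show "\<rho> x = \<rho>' x"
    proof (cases "x \<in> e")
      case True
      then show ?thesis
        using \<rho>(1,2) unfolding PiE_iff extensional_def by auto
    next
      case False
      then show ?thesis
        using fun_cong[OF \<rho>(3), of x] unfolding extend_def by simp
    qed
  qed
  have fin: "finite (V \<rightarrow>\<^sub>E B)"
    using fV fB by (rule finite_PiE)
  have "card ((V - e) \<rightarrow>\<^sub>E B) = card (extend ` ((V - e) \<rightarrow>\<^sub>E B))"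
    by (rule card_image[OF inj, symmetric])
  also have "\<dots> \<le> card {\<kappa> \<in> V \<rightarrow>\<^sub>E B. \<forall>x\<in>e. \<kappa> x = \<sigma> x}"
    using fin by (intro card_mono[OF _ sub]) auto
  finally show ?thesis .
qed

lemma card_colourings_rainbow_edge_ge:
  assumes fV: "finite V" and e: "e \<subseteq> V" "card e = r" "v \<in> e"
  shows "r ^ (card V - r) \<le> card {\<kappa> \<in> V \<rightarrow>\<^sub>E {..<r}. \<kappa> v = 0 \<and> \<kappa> ` (e - {v}) = {1..<r}}"
proof -
  have fe: "finite e"
    using e(1) fV by (rule finite_subset)
  have "card (e - {v}) = card {1..<r}"
    using e fe by simp
  then obtain \<beta> where \<beta>: "bij_betw \<beta> (e - {v}) {1..<r}"
    using fe by (metis finite_Diff finite_atLeastLessThan bij_betw_iff_card)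
  define \<sigma> where "\<sigma> x = (if x = v then 0 else \<beta> x)" for x
  have "\<sigma> x \<in> {..<r}" if "x \<in> e" for x
    using that e bij_betwE[OF \<beta>] card_gt_0_iff fe unfolding \<sigma>_def by fastforce
  then have "r ^ (card V - r) \<le> card {\<kappa> \<in> V \<rightarrow>\<^sub>E {..<r}. \<forall>x\<in>e. \<kappa> x = \<sigma> x}"
    using card_PiE_Diff_le_card_PiE_agreeing[OF fV finite_lessThan e(1), of \<sigma>] fV e fe
    by (simp add: card_PiE card_Diff_subset)
  also have "\<dots> \<le> card {\<kappa> \<in> V \<rightarrow>\<^sub>E {..<r}. \<kappa> v = 0 \<and> \<kappa> ` (e - {v}) = {1..<r}}"
  proof (rule card_mono)
    show "finite {\<kappa> \<in> V \<rightarrow>\<^sub>E {..<r}. \<kappa> v = 0 \<and> \<kappa> ` (e - {v}) = {1..<r}}"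
      using fV by (simp add: finite_PiE)
    have "\<kappa> ` (e - {v}) = {1..<r}" if "\<forall>x\<in>e. \<kappa> x = \<sigma> x" for \<kappa>
    proof -
      have "\<kappa> ` (e - {v}) = \<beta> ` (e - {v})"
        using that unfolding \<sigma>_def by (intro image_cong) auto
      then show ?thesis
        using bij_betw_imp_surj_on[OF \<beta>] by simp
    qed
    moreover have "\<kappa> v = 0" if "\<forall>x\<in>e. \<kappa> x = \<sigma> x" for \<kappa>
      using that e(3) unfolding \<sigma>_def by simp
    ultimately show "{\<kappa> \<in> V \<rightarrow>\<^sub>E {..<r}. \<forall>x\<in>e. \<kappa> x = \<sigma> x}
        \<subseteq> {\<kappa> \<in> V \<rightarrow>\<^sub>E {..<r}. \<kappa> v = 0 \<and> \<kappa> ` (e - {v}) = {1..<r}}"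
      by blast
  qed
  finally show ?thesis .
qed

lemma card_rainbow_edges_le_rainbow_degree:
  assumes H: "uniform_hypergraph r V E" and v: "\<kappa> v = 0"
  shows "card {e \<in> E. v \<in> e \<and> \<kappa> ` (e - {v}) = {1..<r}} \<le> rainbow_degree r V E \<kappa> v"
proof -
  define F where "F = {e \<in> E. v \<in> e \<and> \<kappa> ` (e - {v}) = {1..<r}}"
  define Good where "Good = {S \<in> r_subsets (r - 1) (pos_coloured V \<kappa>). \<kappa> ` S = {1..<r} \<and> insert v S \<in> E}"
  have "inj_on (\<lambda>e. e - {v}) F"
  proof (rule inj_onI)
    fix e e' assume "e \<in> F" "e' \<in> F" "e - {v} = e' - {v}"
    then have "insert v (e - {v}) = insert v (e' - {v})" "v \<in> e" "v \<in> e'"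
      unfolding F_def by auto
    then show "e = e'"
      by (simp add: insert_absorb)
  qed
  moreover have "(\<lambda>e. e - {v}) ` F \<subseteq> Good"
  proof clarify
    fix e assume e: "e \<in> F"
    then have "e \<subseteq> V" "card e = r" "v \<in> e" "\<kappa> ` (e - {v}) = {1..<r}"
      using H unfolding F_def uniform_hypergraph_def by auto
    moreover have "finite e"
      using H \<open>e \<subseteq> V\<close> finite_subset unfolding uniform_hypergraph_def by blast
    moreover have "\<kappa> u \<noteq> 0" if "u \<in> e - {v}" for u
      using that \<open>\<kappa> ` (e - {v}) = {1..<r}\<close> by (metis atLeastLessThan_iff imageI not_one_le_zero)
    ultimately show "e - {v} \<in> Good"
      using e unfolding Good_def F_def r_subsets_def pos_coloured_def by (auto simp: insert_absorb)
  qed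
  moreover have "finite Good"
    using H unfolding Good_def pos_coloured_def uniform_hypergraph_def by (simp add: finite_r_subsets)
  ultimately show ?thesis
    unfolding rainbow_degree_def F_def[symmetric] Good_def[symmetric]
    by (simp add: card_mono flip: card_image)
qed

lemma card_filter_eq_sum_of_bool:
  "finite A \<Longrightarrow> real (card {x \<in> A. P x}) = (\<Sum>x\<in>A. of_bool (P x))"
  by (simp add: Int_def)

lemma sum_colourings_rainbow_degree_ge:
  assumes H: "uniform_hypergraph r V E" and v: "v \<in> V"
  shows "real (r ^ (card V - r)) * real (hg_degree E v)
    \<le> (\<Sum>\<kappa>\<in>V \<rightarrow>\<^sub>E {..<r}. of_bool (\<kappa> v = 0) * real (rainbow_degree r V E \<kappa> v))"
proof -
  define K where "K = V \<rightarrow>\<^sub>E {..<r}"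
  define Ev where "Ev = {e \<in> E. v \<in> e}"
  define rainbow where "rainbow \<kappa> e \<longleftrightarrow> \<kappa> v = 0 \<and> \<kappa> ` (e - {v}) = {1..<r}" for \<kappa> e
  have fV: "finite V"
    using H unfolding uniform_hypergraph_def by auto
  have fK: "finite K"
    unfolding K_def using fV by (intro finite_PiE) auto
  have fEv: "finite Ev"
    unfolding Ev_def using uniform_hypergraph_finite_edges[OF H] by simp
  have "real (r ^ (card V - r)) * real (hg_degree E v) = (\<Sum>e\<in>Ev. real (r ^ (card V - r)))"
    unfolding hg_degree_def Ev_def by simp
  also have "\<dots> \<le> (\<Sum>e\<in>Ev. real (card {\<kappa> \<in> K. rainbow \<kappa> e}))"
  proof (rule sum_mono)
    fix e assume "e \<in> Ev"
    then have "e \<subseteq> V" "card e = r" "v \<in> e"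
      using H unfolding Ev_def uniform_hypergraph_def by auto
    then show "real (r ^ (card V - r)) \<le> real (card {\<kappa> \<in> K. rainbow \<kappa> e})"
      unfolding K_def rainbow_def using card_colourings_rainbow_edge_ge[OF fV] by simp
  qed
  also have "\<dots> = (\<Sum>\<kappa>\<in>K. real (card {e \<in> Ev. rainbow \<kappa> e}))"
    using fK fEv by (simp only: card_filter_eq_sum_of_bool sum.swap[of _ Ev])
  also have "\<dots> \<le> (\<Sum>\<kappa>\<in>K. of_bool (\<kappa> v = 0) * real (rainbow_degree r V E \<kappa> v))"
  proof (rule sum_mono)
    fix \<kappa>
    show "real (card {e \<in> Ev. rainbow \<kappa> e}) \<le> of_bool (\<kappa> v = 0) * real (rainbow_degree r V E \<kappa> v)"
    proof (cases "\<kappa> v = 0")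
      case True
      have "{e \<in> Ev. rainbow \<kappa> e} = {e \<in> E. v \<in> e \<and> \<kappa> ` (e - {v}) = {1..<r}}"
        unfolding Ev_def rainbow_def using True by auto
      then show ?thesis
        using card_rainbow_edges_le_rainbow_degree[OF H, of \<kappa> v] True by simp
    qed (simp add: rainbow_def)
  qed
  finally show ?thesis
    unfolding K_def .
qed

text \<open>Averaging over all colourings \<open>V \<rightarrow> {..<r}\<close>: every edge at \<open>v\<close> is rainbow with \<open>v\<close>
  in colour \<open>0\<close> for at least a fraction \<open>r ^ (-r)\<close> of them.\<close>

lemma sum_light_degree_le:
  assumes H: "uniform_hypergraph r V E" and r: "1 \<le> r" and p: "hg_density r V E \<le> 1/2"
    and L: "L \<subseteq> V" and M: "0 \<le> M" "\<forall>v\<in>L. real (hg_degree E v) \<le> M"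
  shows "(\<Sum>v\<in>L. real (hg_degree E v)) \<le> real r ^ r * (sqrt M * (2 * 2 ^ r * 6 ^ r * hg_disc r V E))"
proof -
  define K where "K = V \<rightarrow>\<^sub>E {..<r}"
  define C where "C = sqrt M * (2 * 2 ^ r * 6 ^ r * hg_disc r V E)"
  define n where "n = card V"
  have fV: "finite V"
    using H unfolding uniform_hypergraph_def by auto
  have C: "0 \<le> C"
    unfolding C_def using M(1) hg_disc_nonneg[OF H] by simp
  have "real (r ^ (n - r)) * (\<Sum>v\<in>L. real (hg_degree E v))
      \<le> (\<Sum>v\<in>L. \<Sum>\<kappa>\<in>K. of_bool (\<kappa> v = 0) * real (rainbow_degree r V E \<kappa> v))"
    unfolding sum_distrib_left K_def n_def
    using L sum_colourings_rainbow_degree_ge[OF H] by (intro sum_mono) auto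
  also have "\<dots> = (\<Sum>\<kappa>\<in>K. \<Sum>v\<in>L. of_bool (\<kappa> v = 0) * real (rainbow_degree r V E \<kappa> v))"
    by (rule sum.swap)
  also have "\<dots> \<le> (\<Sum>\<kappa>\<in>K. C)"
    unfolding C_def K_def using sum_rainbow_degree_le[OF H r p _ L M]
    by (intro sum_mono) (simp add: PiE_iff)
  also have "\<dots> = real r ^ n * C"
    unfolding K_def n_def using fV by (simp add: card_PiE)
  also have "\<dots> \<le> real r ^ (n - r + r) * C"
    using r C by (intro mult_right_mono power_increasing) auto
  also have "\<dots> = real (r ^ (n - r)) * (real r ^ r * C)"
    by (simp add: power_add)
  finally show ?thesis
    using r unfolding C_def by (simp add: mult_le_cancel_left_pos)
qed

lemma sqrt_two_power_mult_le:
  fixes d :: real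
  assumes "0 \<le> d"
  shows "sqrt (2 ^ (r + 2) * d) \<le> 2 ^ (r + 1) * sqrt d"
proof -
  have "sqrt (2 ^ (r + 2)) \<le> sqrt ((2 ^ (r + 1))\<^sup>2 :: real)"
    by (intro real_sqrt_le_mono) (simp add: power_increasing flip: power_mult)
  also have "\<dots> = 2 ^ (r + 1)"
    by (simp only: real_sqrt_abs abs_of_nonneg zero_le_power zero_le_numeral)
  finally have "sqrt (2 ^ (r + 2)) * sqrt d \<le> 2 ^ (r + 1) * sqrt d"
    by (rule mult_right_mono) (simp add: assms)
  then show ?thesis
    by (simp only: real_sqrt_mult)
qed

lemma hg_disc_ge_of_light_vertices:
  assumes H: "uniform_hypergraph r V E" and r: "1 \<le> r" and p: "hg_density r V E \<le> 1/2"
    and d: "0 < hg_avg_degree r V E"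
    and light: "hg_avg_degree r V E * real (card V) / 2
      \<le> (\<Sum>v\<in>{v \<in> V. real (hg_degree E v) < 2 ^ (r + 2) * hg_avg_degree r V E}. real (hg_degree E v))"
  shows "sqrt (hg_avg_degree r V E) * real (card V) \<le> 24 ^ (r + 1) * real r ^ r * hg_disc r V E"
proof -
  define d where "d = hg_avg_degree r V E"
  define D where "D = 2 * 2 ^ r * 6 ^ r * hg_disc r V E"
  have D: "0 \<le> D"
    unfolding D_def using hg_disc_nonneg[OF H] by simp
  have d0: "0 < d"
    unfolding d_def by (rule d)
  have "real r ^ r * (sqrt (2 ^ (r + 2) * d) * D) \<le> real r ^ r * (2 ^ (r + 1) * sqrt d * D)"
    using D d0 by (intro mult_left_mono mult_right_mono sqrt_two_power_mult_le) auto
  moreover have "d * real (card V) / 2 \<le> real r ^ r * (sqrt (2 ^ (r + 2) * d) * D)"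
  proof -
    have "(\<Sum>v\<in>{v \<in> V. real (hg_degree E v) < 2 ^ (r + 2) * d}. real (hg_degree E v))
        \<le> real r ^ r * (sqrt (2 ^ (r + 2) * d) * D)"
      unfolding D_def using d0 by (intro sum_light_degree_le[OF H r p]) auto
    then show ?thesis
      using light[folded d_def] by linarith
  qed
  ultimately have "d * real (card V) / 2 \<le> real r ^ r * (2 ^ (r + 1) * sqrt d * D)"
    by linarith
  moreover have "2 ^ (r + 1) * D = 4 * (2 ^ r * 2 ^ r * 6 ^ r) * hg_disc r V E"
    unfolding D_def by (simp add: power_add algebra_simps)
  moreover have "(2::real) ^ r * 2 ^ r * 6 ^ r = 24 ^ r"
    by (simp flip: power_mult_distrib)
  ultimately have "d * real (card V) \<le> sqrt d * (8 * 24 ^ r * real r ^ r * hg_disc r V E)"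
    by (simp add: algebra_simps)
  moreover have "sqrt d * (sqrt d * real (card V)) = d * real (card V)"
    using d0 by (simp add: mult.assoc[symmetric])
  ultimately have "sqrt d * (sqrt d * real (card V)) \<le> sqrt d * (8 * 24 ^ r * real r ^ r * hg_disc r V E)"
    by (simp only:)
  then have "sqrt d * real (card V) \<le> 8 * 24 ^ r * real r ^ r * hg_disc r V E"
    using d0 by (simp add: mult_le_cancel_left_pos)
  also have "\<dots> \<le> 24 ^ (r + 1) * real r ^ r * hg_disc r V E"
    using hg_disc_nonneg[OF H] by (intro mult_right_mono) auto
  finally show ?thesis
    unfolding d_def .
qed

lemma hg_disc_lower_bound:
  assumes H: "uniform_hypergraph r V E" and r: "1 \<le> r"
    and d: "1 \<le> hg_avg_degree r V E" "hg_avg_degree r V E \<le> real (card V - 1 choose (r - 1)) / 2"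
  shows "sqrt (hg_avg_degree r V E) * real (card V) \<le> 24 ^ (r + 1) * real r ^ r * hg_disc r V E"
proof -
  define d where "d = hg_avg_degree r V E"
  define heavy where "heavy = {v \<in> V. 2 ^ (r + 2) * d \<le> real (hg_degree E v)}"
  define light where "light = {v \<in> V. real (hg_degree E v) < 2 ^ (r + 2) * d}"
  have fV: "finite V"
    using H unfolding uniform_hypergraph_def by auto
  have "V = heavy \<union> light" "heavy \<inter> light = {}"
    unfolding heavy_def light_def by auto
  then have "d * real (card V) = (\<Sum>v\<in>heavy. real (hg_degree E v)) + (\<Sum>v\<in>light. real (hg_degree E v))"
    using sum_hg_degree[OF H] fV unfolding d_def by (metis finite_Un sum.union_disjoint)
  then consider "d * real (card V) / 2 \<le> (\<Sum>v\<in>heavy. real (hg_degree E v))"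
    | "d * real (card V) / 2 \<le> (\<Sum>v\<in>light. real (hg_degree E v))"
    by linarith
  then show ?thesis
  proof cases
    case 1
    have "sqrt d \<le> d"
      using d(1) unfolding d_def by (intro real_le_lsqrt) (auto simp: power2_eq_square)
    then have "sqrt d * real (card V) \<le> 2 ^ (r + 2) * (d * real (card V) / 2 ^ (r + 2))"
      by (simp add: mult_right_mono)
    also have "\<dots> \<le> 2 ^ (r + 2) * hg_disc r V E"
      using hg_disc_ge_of_heavy_vertices[OF H r, folded d_def, OF 1[unfolded heavy_def]]
      by (rule mult_left_mono) simp
    also have "\<dots> \<le> 24 ^ (r + 1) * real r ^ r * hg_disc r V E"
    proof (intro mult_right_mono hg_disc_nonneg[OF H])
      have "(2::real) ^ (r + 2) \<le> 4 ^ (r + 1)"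
        by (simp add: power_add power_mono)
      also have "\<dots> \<le> 24 ^ (r + 1)"
        by (intro power_mono) auto
      also have "\<dots> \<le> 24 ^ (r + 1) * real r ^ r"
        using r by simp
      finally show "(2::real) ^ (r + 2) \<le> 24 ^ (r + 1) * real r ^ r" .
    qed
    finally show ?thesis
      unfolding d_def .
  next
    case 2
    then show ?thesis
      using hg_disc_ge_of_light_vertices[OF H r hg_density_le_half[OF H r d]] d(1)
      unfolding d_def light_def by simp
  qed
qed

theorem theorem1p3:
  fixes r :: nat
  assumes "r \<ge> 2"
  shows "\<exists>c::real. c > 0 \<and>
    (\<forall>(V :: nat set) (E :: nat set set).
       uniform_hypergraph r V E \<longrightarrow>
       1 \<le> hg_avg_degree r V E \<longrightarrow>
       hg_avg_degree r V E \<le> real (card V - 1 choose (r - 1)) / 2 \<longrightarrow>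
       hg_disc r V E \<ge> c * sqrt (hg_avg_degree r V E) * real (card V))"
proof (intro exI conjI allI impI)
  show "0 < 1 / (24 ^ (r + 1) * real r ^ r)"
    using assms by simp
next
  fix V :: "nat set" and E :: "nat set set"
  assume "uniform_hypergraph r V E" "1 \<le> hg_avg_degree r V E"
    "hg_avg_degree r V E \<le> real (card V - 1 choose (r - 1)) / 2"
  then have "sqrt (hg_avg_degree r V E) * real (card V) \<le> 24 ^ (r + 1) * real r ^ r * hg_disc r V E"
    using assms by (intro hg_disc_lower_bound) auto
  then show "1 / (24 ^ (r + 1) * real r ^ r) * sqrt (hg_avg_degree r V E) * real (card V) \<le> hg_disc r V E"
    using assms by (simp add: field_simps)
qed

end
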